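(* Let $n,k\in\mathbb N$ and $f\in\mathfrak Q_n^k(\mathbb R)$. Then: (a) for all $s,l\in\mathbb Z_{\ge0}$ with $s\le n\vee l$ and $l\le k$, the function $f^{(l)}u^s$ is in $C_0(\mathbb R)$ and has Fourier transform in $L^1(\mathbb R)$; (b) for all $s,l\in\mathbb Z_{\ge0}$ with $s\le n\vee l$ and $l\le k$, the function $(fu^s)^{(l)}$ is in $C_0(\mathbb R)$ and has Fourier transform in $L^1(\mathbb R)$; (c) $\mathfrak Q_n^k(\mathbb R)\subseteq\mathscr W_k(\mathbb R)$.
   Context: $u(x)=x-i$, $u^m$ denotes $x\mapsto(x-i)^m$, $x\vee y=\max\{x,y\}$. $\mathfrak Q_n^k(\mathbb R)$ is the set of $f\in C^k(\mathbb R)$ such that (i) $fu^{2n}$ is bounded and continuous, (ii) $f^{(l)}u^{n+l+1}\in C_0(\mathbb R)$ for $1\le l\le k$, (iii) $f^{(k)}u^{k\vee n}\in C_0(\mathbb R)$ and its Fourier transform is in $L^1(\mathbb R)$. $W_0(\mathbb R)$ is the set of $g\in C_0(\mathbb R)$ with $g(x)=\int e^{ixy}d\mu(y)$ for a finite complex Borel measure $\mu$, and $\mathscr W_k(\mathbb R)=\{f\in C^k(\mathbb R):(fu^p)^{(p)}\in W_0(\mathbb R),\ p=0,\dots,k\}$. *)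

theory Defs
  imports "HOL-Analysis.Analysis"
begin

definition vderiv :: "(real \<Rightarrow> complex) \<Rightarrow> (real \<Rightarrow> complex)" where
  "vderiv f = (\<lambda>x. vector_derivative f (at x))"

definition nderiv :: "nat \<Rightarrow> (real \<Rightarrow> complex) \<Rightarrow> (real \<Rightarrow> complex)" where
  "nderiv l f = (vderiv ^^ l) f"

definition Ck :: "nat \<Rightarrow> (real \<Rightarrow> complex) set" where
  "Ck k = {f. (\<forall>l<k. \<forall>x. nderiv l f differentiable (at x))
              \<and> continuous_on UNIV (nderiv k f)}"

definition upow :: "nat \<Rightarrow> real \<Rightarrow> complex" where
  "upow m = (\<lambda>x. (complex_of_real x - \<i>) ^ m)"

definition C0 :: "(real \<Rightarrow> complex) set" where
  "C0 = {g. continuous_on UNIV g \<and> (g \<longlongrightarrow> 0) at_infinity}"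

text \<open>The Fourier transform of g (as a tempered distribution) lies in L^1:
  g is the (inverse) Fourier integral of some integrable function.\<close>
definition FT_L1 :: "(real \<Rightarrow> complex) \<Rightarrow> bool" where
  "FT_L1 g = (\<exists>h :: real \<Rightarrow> complex. integrable lborel h \<and>
      (\<forall>x. g x = (\<integral>y. exp (\<i> * complex_of_real (x * y)) * h y \<partial>lborel)))"

definition Qnk :: "nat \<Rightarrow> nat \<Rightarrow> (real \<Rightarrow> complex) set" where
  "Qnk n k = {f. f \<in> Ck k
     \<and> continuous_on UNIV (\<lambda>x. f x * upow (2*n) x)
     \<and> bounded (range (\<lambda>x. f x * upow (2*n) x))
     \<and> (\<forall>l. 1 \<le> l \<and> l \<le> k \<longrightarrow> (\<lambda>x. nderiv l f x * upow (n+l+1) x) \<in> C0)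
     \<and> (\<lambda>x. nderiv k f x * upow (max k n) x) \<in> C0
     \<and> FT_L1 (\<lambda>x. nderiv k f x * upow (max k n) x)}"

text \<open>W_0(R): C_0 functions that are Fourier-Stieltjes transforms of a finite complex
  Borel measure; the complex measure is represented in polar form h d|mu| with
  |mu| a finite Borel measure M and h an M-integrable complex density.\<close>
definition W0 :: "(real \<Rightarrow> complex) set" where
  "W0 = {g. g \<in> C0 \<and> (\<exists>(M :: real measure) (h :: real \<Rightarrow> complex).
      finite_measure M \<and> sets M = sets borel \<and> integrable M h \<and>
      (\<forall>x. g x = (\<integral>y. exp (\<i> * complex_of_real (x * y)) * h y \<partial>M)))}"

definition Wk :: "nat \<Rightarrow> (real \<Rightarrow> complex) set" where
  "Wk k = {f. f \<in> Ck k \<and>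
     (\<forall>p\<le>k. nderiv p (\<lambda>x. f x * upow p x) \<in> W0)}"

end

theory Submission
  imports Defs "HOL-Probability.Probability" "HOL-Real_Asymp.Real_Asymp"
begin

text \<open>
  Everything rests on one lemma: if \<open>g\<close> is continuously differentiable and vanishes at infinity,
  \<open>(1 + t^2) g'(t)\<close> is bounded and \<open>g'\<close> is the transform of an integrable \<open>\<psi>\<close>, then \<open>g\<close> is
  the transform of an integrable function as well. Indeed \<open>\<integral> g' = 0\<close> and
  \<open>\<integral> sqrt|t| |g'(t)| < \<infinity>\<close>, so Fourier inversion gives \<open>|\<psi>(y)| \<le> C sqrt|y|\<close>; hence
  \<open>\<psi>(y) / (i y)\<close> is integrable, its transform is an antiderivative of \<open>g'\<close> and so differs from
  \<open>g\<close> by a constant, and the constant is \<open>0\<close> because a transform cannot tend to a nonzero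
  limit at infinity.

  Part (a) then follows by downward induction on \<open>l\<close>. For \<open>l = k\<close>, the hypothesis on
  \<open>f^(k) u^max(k,n)\<close> is multiplied by a negative power of \<open>u\<close>, itself a transform (\<open>1/u\<close> is
  the transform of \<open>i e^y\<close> on \<open>y < 0\<close>). For \<open>l < k\<close> the lemma is applied to \<open>f^(l) u^s\<close>,
  whose derivative \<open>f^(l+1) u^s + s f^(l) u^(s-1)\<close> is covered by induction on \<open>l\<close> and \<open>s\<close>,
  while the decay conditions in \<open>Qnk\<close> bound \<open>(1 + t^2)\<close> times it. Part (b) expands
  \<open>(f u^s)^(l)\<close> by the same product rule into terms covered by (a), and (c) writes an integrable
  \<open>h\<close> as a density with respect to the finite measure \<open>|h(y)| dy\<close>.
\<close>

section \<open>Fourier integrals of integrable functions\<close>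

definition fourier :: "(real \<Rightarrow> complex) \<Rightarrow> real \<Rightarrow> complex" where
  "fourier h x = (\<integral>y. exp (\<i> * complex_of_real (x * y)) * h y \<partial>lborel)"

lemma FT_L1_iff_fourier: "FT_L1 g \<longleftrightarrow> (\<exists>h. integrable lborel h \<and> g = fourier h)"
  by (auto simp: FT_L1_def fourier_def fun_eq_iff)

lemma integrable_fourier_integrand:
  assumes "integrable lborel h"
  shows "integrable lborel (\<lambda>y. exp (\<i> * complex_of_real (x * y)) * h y)"
proof (rule Bochner_Integration.integrable_bound[OF assms])
  show "(\<lambda>y. exp (\<i> * complex_of_real (x * y)) * h y) \<in> borel_measurable lborel"
    using borel_measurable_integrable[OF assms] by measurable
qed (simp add: norm_mult)

lemma norm_fourier_le: "norm (fourier h x) \<le> (\<integral>y. norm (h y) \<partial>lborel)"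
  unfolding fourier_def by (rule order_trans[OF integral_norm_bound]) (simp add: norm_mult)

lemma fourier_add:
  assumes "integrable lborel h1" "integrable lborel h2"
  shows "fourier (\<lambda>y. h1 y + h2 y) x = fourier h1 x + fourier h2 x"
  unfolding fourier_def
  using integrable_fourier_integrand[OF assms(1)] integrable_fourier_integrand[OF assms(2)]
  by (simp add: distrib_left)

lemma fourier_diff:
  assumes "integrable lborel h1" "integrable lborel h2"
  shows "fourier (\<lambda>y. h1 y - h2 y) x = fourier h1 x - fourier h2 x"
  unfolding fourier_def
  using integrable_fourier_integrand[OF assms(1)] integrable_fourier_integrand[OF assms(2)]
  by (simp add: right_diff_distrib)

lemma fourier_cmult: "fourier (\<lambda>y. c * h y) x = c * fourier h x"
  unfolding fourier_def by (simp add: mult.left_commute)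

lemma fourier_cong_AE:
  assumes [measurable]: "h \<in> borel_measurable lborel" "h' \<in> borel_measurable lborel"
    and "AE y in lborel. h y = h' y"
  shows "fourier h x = fourier h' x"
  unfolding fourier_def by (rule integral_cong_AE) (use assms(3) in \<open>auto elim!: eventually_mono\<close>)

lemma fourier_modulation:
  "fourier (\<lambda>y. exp (\<i> * complex_of_real (a * y)) * h y) x = fourier h (a + x)"
  unfolding fourier_def
  by (intro Bochner_Integration.integral_cong refl) (simp add: algebra_simps mult_exp_exp)

lemma fourier_cnj: "fourier (\<lambda>y. cnj (h y)) x = cnj (fourier h (- x))"
proof -
  have "fourier (\<lambda>y. cnj (h y)) x = (\<integral>y. cnj (exp (\<i> * complex_of_real ((- x) * y)) * h y) \<partial>lborel)"
    unfolding fourier_def by (intro Bochner_Integration.integral_cong refl) (simp add: exp_cnj)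
  then show ?thesis
    unfolding fourier_def by (simp only: Bochner_Integration.integral_cnj)
qed

lemma FT_L1_add:
  assumes "FT_L1 f" "FT_L1 g"
  shows "FT_L1 (\<lambda>x. f x + g x)"
proof -
  obtain h1 h2 where "integrable lborel h1" "f = fourier h1" "integrable lborel h2" "g = fourier h2"
    using assms unfolding FT_L1_iff_fourier by blast
  then show ?thesis
    unfolding FT_L1_iff_fourier
    by (intro exI[of _ "\<lambda>y. h1 y + h2 y"]) (auto simp: fourier_add)
qed

lemma FT_L1_cmult:
  assumes "FT_L1 f"
  shows "FT_L1 (\<lambda>x. c * f x)"
proof -
  obtain h where "integrable lborel h" "f = fourier h"
    using assms unfolding FT_L1_iff_fourier by blast
  then show ?thesis
    unfolding FT_L1_iff_fourier
    by (intro exI[of _ "\<lambda>y. c * h y"]) (auto simp: fourier_cmult)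
qed

lemma integral_dominated_convergence_at:
  fixes s :: "real \<Rightarrow> real \<Rightarrow> complex"
  assumes [measurable]: "\<And>t. s t \<in> borel_measurable lborel" "f \<in> borel_measurable lborel"
    and w: "integrable lborel w"
    and lim: "\<And>y. ((\<lambda>t. s t y) \<longlongrightarrow> f y) (at t0 within S)"
    and bound: "\<And>t y. t \<in> S \<Longrightarrow> norm (s t y) \<le> w y"
  shows "((\<lambda>t. \<integral>y. s t y \<partial>lborel) \<longlongrightarrow> (\<integral>y. f y \<partial>lborel)) (at t0 within S)"
  unfolding tendsto_at_iff_sequentially comp_def
proof (intro allI impI)
  fix X :: "nat \<Rightarrow> real" assume X: "\<forall>i. X i \<in> S - {t0}" "X \<longlonglongrightarrow> t0"
  show "(\<lambda>i. \<integral>y. s (X i) y \<partial>lborel) \<longlonglongrightarrow> (\<integral>y. f y \<partial>lborel)"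
  proof (rule integral_dominated_convergence[OF _ _ w])
    show "AE y in lborel. (\<lambda>i. s (X i) y) \<longlonglongrightarrow> f y"
      using lim X unfolding tendsto_at_iff_sequentially comp_def by auto
    show "AE y in lborel. norm (s (X i) y) \<le> w y" for i
      using bound X by auto
  qed auto
qed

lemma continuous_on_fourier:
  assumes "integrable lborel h"
  shows "continuous_on UNIV (fourier h)"
proof -
  have [measurable]: "h \<in> borel_measurable borel" using assms by auto
  have "isCont (fourier h) x" for x
    unfolding isCont_def fourier_def
  proof (rule integral_dominated_convergence_at[where w="\<lambda>y. norm (h y)"])
    show "integrable lborel (\<lambda>y. norm (h y))" using assms by auto
    show "((\<lambda>t. exp (\<i> * complex_of_real (t * y)) * h y) \<longlongrightarrow> exp (\<i> * complex_of_real (x * y)) * h y)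
        (at x within UNIV)" for y
      by (auto intro!: tendsto_eq_intros)
  qed (auto simp: norm_mult)
  then show ?thesis by (simp add: continuous_at_imp_continuous_on)
qed

lemma borel_measurable_fourier[measurable]: "integrable lborel h \<Longrightarrow> fourier h \<in> borel_measurable borel"
  by (rule borel_measurable_continuous_onI) (rule continuous_on_fourier)

lemma has_vector_derivative_of_difference_quotient:
  fixes f :: "real \<Rightarrow> complex"
  assumes "((\<lambda>h. (f (x + h) - f x) / complex_of_real h) \<longlongrightarrow> D) (at 0)"
  shows "(f has_vector_derivative D) (at x)"
proof -
  have "((\<lambda>h. norm ((f (x + h) - f x) / complex_of_real h - D)) \<longlongrightarrow> 0) (at 0)"
    using assms by (simp add: tendsto_norm_zero_iff LIM_zero_iff)
  then have "((\<lambda>h. norm (f (x + h) - f x - h *\<^sub>R D) / norm h) \<longlongrightarrow> 0) (at 0)"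
  proof (rule Lim_transform_eventually)
    have "norm ((f (x + h) - f x) / complex_of_real h - D) = norm (f (x + h) - f x - h *\<^sub>R D) / norm h"
      if "h \<noteq> 0" for h
    proof -
      have "(f (x + h) - f x) / complex_of_real h - D = (f (x + h) - f x - h *\<^sub>R D) / complex_of_real h"
        using that by (simp add: field_simps scaleR_conv_of_real)
      then show ?thesis by (simp add: norm_divide)
    qed
    then show "\<forall>\<^sub>F h in at 0. norm ((f (x + h) - f x) / complex_of_real h - D)
        = norm (f (x + h) - f x - h *\<^sub>R D) / norm h"
      unfolding eventually_at_filter by (auto intro: always_eventually)
  qed
  then show ?thesis
    unfolding has_vector_derivative_def has_derivative_at
    by (auto intro: bounded_linear_scaleR_left)
qed

lemma norm_exp_i_minus_1_le: "norm (exp (\<i> * complex_of_real t) - 1) \<le> \<bar>t\<bar>"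
  using iexp_approx1[of t 0] by simp

lemma norm_exp_i_minus_1_le_sqrt: "norm (exp (\<i> * complex_of_real t) - 1) \<le> 2 * sqrt \<bar>t\<bar>"
proof (cases "\<bar>t\<bar> \<le> 4")
  case True
  have "norm (exp (\<i> * complex_of_real t) - 1) \<le> sqrt \<bar>t\<bar> * sqrt \<bar>t\<bar>"
    using norm_exp_i_minus_1_le[of t] by simp
  also have "\<dots> \<le> 2 * sqrt \<bar>t\<bar>"
    using True real_sqrt_le_mono[of "\<bar>t\<bar>" 4] by (intro mult_right_mono) auto
  finally show ?thesis .
next
  case False
  have "norm (exp (\<i> * complex_of_real t) - 1) \<le> norm (exp (\<i> * complex_of_real t)) + norm (1::complex)"
    by (rule norm_triangle_ineq4)
  then have "norm (exp (\<i> * complex_of_real t) - 1) \<le> 2"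
    by simp
  moreover have "1 \<le> sqrt \<bar>t\<bar>"
    using False by simp
  ultimately show ?thesis by linarith
qed

lemma norm_exp_i_difference_quotient_le:
  assumes "h \<noteq> 0"
  shows "norm ((exp (\<i> * complex_of_real (h * y)) - 1) / complex_of_real h - \<i> * complex_of_real y)
    \<le> \<bar>h\<bar> * y\<^sup>2 / 2"
proof -
  define A where "A = norm (exp (\<i> * complex_of_real (h * y)) - (1 + \<i> * complex_of_real (h * y)))"
  have A: "A \<le> \<bar>h * y\<bar>\<^sup>2 / 2"
    using iexp_approx1[of "h * y" 1] unfolding A_def by (simp add: numeral_2_eq_2)
  have "(exp (\<i> * complex_of_real (h * y)) - 1) / complex_of_real h - \<i> * complex_of_real y
      = (exp (\<i> * complex_of_real (h * y)) - (1 + \<i> * complex_of_real (h * y))) / complex_of_real h"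
    using assms by (simp add: field_simps)
  then have "norm ((exp (\<i> * complex_of_real (h * y)) - 1) / complex_of_real h - \<i> * complex_of_real y)
      = A / \<bar>h\<bar>"
    by (simp add: A_def norm_divide)
  also have "\<dots> \<le> (\<bar>h * y\<bar>\<^sup>2 / 2) / \<bar>h\<bar>"
    using A assms by (intro divide_right_mono) auto
  also have "\<dots> = \<bar>h\<bar> * y\<^sup>2 / 2"
    using assms by (simp add: power2_eq_square abs_mult field_simps)
  finally show ?thesis .
qed

lemma fourier_has_vector_derivative:
  assumes H: "integrable lborel H" and yH: "integrable lborel (\<lambda>y. complex_of_real y * H y)"
  shows "(fourier H has_vector_derivative fourier (\<lambda>y. \<i> * complex_of_real y * H y) x) (at x)"
proof (rule has_vector_derivative_of_difference_quotient)
  have [measurable]: "H \<in> borel_measurable lborel" using H by auto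
  define q where "q h y = (exp (\<i> * complex_of_real (h * y)) - 1) / complex_of_real h" for h y
  have quotient: "(fourier H (x + h) - fourier H x) / complex_of_real h =
     (\<integral>y. exp (\<i> * complex_of_real (x * y)) * q h y * H y \<partial>lborel)" for h
  proof -
    have "fourier H (x + h) - fourier H x = (\<integral>y. exp (\<i> * complex_of_real (x * y)) * (exp (\<i> * complex_of_real (h * y)) - 1) * H y \<partial>lborel)"
      unfolding fourier_def
      using integrable_fourier_integrand[OF H, of "x + h"] integrable_fourier_integrand[OF H, of x]
      by (simp flip: Bochner_Integration.integral_diff)
         (simp add: algebra_simps mult_exp_exp)
    then show ?thesis
      unfolding q_def by (simp add: mult.assoc)
  qed
  show "((\<lambda>h. (fourier H (x + h) - fourier H x) / complex_of_real h)
      \<longlongrightarrow> fourier (\<lambda>y. \<i> * complex_of_real y * H y) x) (at 0)"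
    unfolding quotient unfolding fourier_def
  proof (rule integral_dominated_convergence_at[where w="\<lambda>y. norm (complex_of_real y * H y)"])
    show "integrable lborel (\<lambda>y. norm (complex_of_real y * H y))"
      using yH by auto
    fix y :: real
    have "((\<lambda>h. q h y - \<i> * complex_of_real y) \<longlongrightarrow> 0) (at 0)"
    proof (rule Lim_null_comparison)
      show "\<forall>\<^sub>F h in at 0. norm (q h y - \<i> * complex_of_real y) \<le> \<bar>h\<bar> * y\<^sup>2 / 2"
        unfolding eventually_at_filter q_def
        by (intro always_eventually allI impI norm_exp_i_difference_quotient_le)
      show "((\<lambda>h. \<bar>h\<bar> * y\<^sup>2 / 2) \<longlongrightarrow> 0) (at 0)"
        by (auto intro!: tendsto_eq_intros)
    qed
    then have "((\<lambda>h. q h y) \<longlongrightarrow> \<i> * complex_of_real y) (at 0)"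
      by (simp add: LIM_zero_iff)
    then show "((\<lambda>h. exp (\<i> * complex_of_real (x * y)) * q h y * H y)
        \<longlongrightarrow> exp (\<i> * complex_of_real (x * y)) * (\<i> * complex_of_real y * H y)) (at 0 within UNIV)"
      by (auto intro!: tendsto_eq_intros)
  next
    fix h y :: real
    have "norm (q h y) \<le> \<bar>y\<bar>"
      using norm_exp_i_minus_1_le[of "h * y"]
      by (cases "h = 0") (auto simp: q_def norm_divide divide_simps abs_mult mult.commute)
    then show "norm (exp (\<i> * complex_of_real (x * y)) * q h y * H y) \<le> norm (complex_of_real y * H y)"
      by (simp add: norm_mult mult_right_mono)
  qed (simp_all add: q_def)
qed

lemma integrable_pair_lborel_bounded_by_product:
  fixes F :: "real \<times> real \<Rightarrow> complex" and a b :: "real \<Rightarrow> real"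
  assumes [measurable]: "F \<in> borel_measurable (lborel \<Otimes>\<^sub>M lborel)"
    and a: "integrable lborel a" and b: "integrable lborel b"
    and bound: "\<And>x y. norm (F (x, y)) \<le> norm (a x) * norm (b y)"
  shows "integrable (lborel \<Otimes>\<^sub>M lborel) F"
  unfolding integrable_iff_bounded
proof
  have [measurable]: "a \<in> borel_measurable borel" "b \<in> borel_measurable borel" using a b by auto
  have "(\<integral>\<^sup>+p. ennreal (norm (F p)) \<partial>(lborel \<Otimes>\<^sub>M lborel))
      \<le> (\<integral>\<^sup>+p. ennreal (norm (a (fst p)) * norm (b (snd p))) \<partial>(lborel \<Otimes>\<^sub>M lborel))"
    using bound by (intro nn_integral_mono) (metis ennreal_leI prod.collapse)
  also have "\<dots> = (\<integral>\<^sup>+x. \<integral>\<^sup>+y. ennreal (norm (a x)) * ennreal (norm (b y)) \<partial>lborel \<partial>lborel)"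
    by (subst lborel.nn_integral_fst[symmetric]) (auto simp: ennreal_mult)
  also have "\<dots> = (\<integral>\<^sup>+x. ennreal (norm (a x)) \<partial>lborel) * (\<integral>\<^sup>+y. ennreal (norm (b y)) \<partial>lborel)"
    by (simp add: nn_integral_cmult nn_integral_multc)
  also have "\<dots> < \<infinity>"
    using a b by (auto simp: integrable_iff_bounded ennreal_mult_less_top)
  finally show "(\<integral>\<^sup>+p. ennreal (norm (F p)) \<partial>(lborel \<Otimes>\<^sub>M lborel)) < \<infinity>" .
qed simp

lemma integral_fourier_mult_swap:
  assumes a: "integrable lborel a" and b: "integrable lborel b"
  shows "(\<integral>s. fourier a (c * s) * b s \<partial>lborel) = (\<integral>y. a y * fourier b (c * y) \<partial>lborel)"
proof -
  have [measurable]: "a \<in> borel_measurable borel" "b \<in> borel_measurable borel" using a b by auto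
  have I: "integrable (lborel \<Otimes>\<^sub>M lborel) (\<lambda>(s, y). exp (\<i> * complex_of_real (c * s * y)) * a y * b s)"
    by (rule integrable_pair_lborel_bounded_by_product[where a="\<lambda>s. norm (b s)" and b="\<lambda>y. norm (a y)"])
       (auto simp: a b norm_mult)
  have "(\<integral>s. fourier a (c * s) * b s \<partial>lborel)
      = (\<integral>s. \<integral>y. exp (\<i> * complex_of_real (c * s * y)) * a y * b s \<partial>lborel \<partial>lborel)"
    unfolding fourier_def by simp
  also have "\<dots> = (\<integral>y. \<integral>s. exp (\<i> * complex_of_real (c * s * y)) * a y * b s \<partial>lborel \<partial>lborel)"
    using lborel_pair.Fubini_integral[OF I] by simp
  also have "\<dots> = (\<integral>y. a y * fourier b (c * y) \<partial>lborel)"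
    unfolding fourier_def
    by (intro Bochner_Integration.integral_cong refl) (simp add: mult_ac flip: integral_mult_right_zero)
  finally show ?thesis .
qed

lemma integrable_convolution_integrand:
  fixes h1 h2 a :: "real \<Rightarrow> complex"
  assumes h1: "integrable lborel h1" and h2: "integrable lborel h2"
    and [measurable]: "a \<in> borel_measurable borel" and a_le_1: "\<And>w. norm (a w) \<le> 1"
  shows "integrable (lborel \<Otimes>\<^sub>M lborel) (\<lambda>(z, w). a w * h1 (w - z) * h2 z)"
proof -
  have [measurable]: "h1 \<in> borel_measurable borel" "h2 \<in> borel_measurable borel"
    using h1 h2 by auto
  show ?thesis
    unfolding integrable_iff_bounded
  proof
    have "(\<integral>\<^sup>+p. ennreal (norm ((\<lambda>(z, w). a w * h1 (w - z) * h2 z) p)) \<partial>(lborel \<Otimes>\<^sub>M lborel))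
        \<le> (\<integral>\<^sup>+(z, w). ennreal (norm (h1 (w - z))) * ennreal (norm (h2 z)) \<partial>(lborel \<Otimes>\<^sub>M lborel))"
      using a_le_1 by (intro nn_integral_mono)
        (auto simp: norm_mult mult.assoc ennreal_mult[symmetric] intro!: ennreal_leI mult_left_le_one_le)
    also have "\<dots> = (\<integral>\<^sup>+z. \<integral>\<^sup>+w. ennreal (norm (h1 (w - z))) * ennreal (norm (h2 z)) \<partial>lborel \<partial>lborel)"
      by (subst lborel.nn_integral_fst[symmetric]) auto
    also have "\<dots> = (\<integral>\<^sup>+z. (\<integral>\<^sup>+w. ennreal (norm (h1 w)) \<partial>lborel) * ennreal (norm (h2 z)) \<partial>lborel)"
    proof (intro nn_integral_cong)
      fix z :: real
      have "(\<integral>\<^sup>+w. ennreal (norm (h1 (w - z))) \<partial>lborel) = (\<integral>\<^sup>+w. ennreal (norm (h1 w)) \<partial>lborel)"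
        using nn_integral_real_affine[of "\<lambda>w. ennreal (norm (h1 w))" 1 "- z"] by simp
      then show "(\<integral>\<^sup>+w. ennreal (norm (h1 (w - z))) * ennreal (norm (h2 z)) \<partial>lborel)
          = (\<integral>\<^sup>+w. ennreal (norm (h1 w)) \<partial>lborel) * ennreal (norm (h2 z))"
        by (simp add: nn_integral_multc)
    qed
    also have "\<dots> = (\<integral>\<^sup>+w. ennreal (norm (h1 w)) \<partial>lborel) * (\<integral>\<^sup>+z. ennreal (norm (h2 z)) \<partial>lborel)"
      by (simp add: nn_integral_cmult)
    also have "\<dots> < \<infinity>"
      using h1 h2 by (auto simp: integrable_iff_bounded ennreal_mult_less_top)
    finally show "(\<integral>\<^sup>+p. ennreal (norm ((\<lambda>(z, w). a w * h1 (w - z) * h2 z) p)) \<partial>(lborel \<Otimes>\<^sub>M lborel)) < \<infinity>" .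
  qed measurable
qed

lemma FT_L1_mult:
  assumes "FT_L1 f" "FT_L1 g"
  shows "FT_L1 (\<lambda>x. f x * g x)"
proof -
  obtain h1 h2 where h1: "integrable lborel h1" "f = fourier h1"
    and h2: "integrable lborel h2" "g = fourier h2"
    using assms unfolding FT_L1_iff_fourier by blast
  have [measurable]: "h1 \<in> borel_measurable borel" "h2 \<in> borel_measurable borel"
    using h1 h2 by auto
  define h where "h w = (\<integral>z. h1 (w - z) * h2 z \<partial>lborel)" for w
  have "integrable lborel h"
    using lborel_pair.integrable_snd[OF integrable_convolution_integrand[OF h1(1) h2(1), of "\<lambda>_. 1"]]
    unfolding h_def by simp
  moreover have "fourier h x = f x * g x" for x
  proof -
    have "fourier h x = (\<integral>w. \<integral>z. exp (\<i> * complex_of_real (x * w)) * h1 (w - z) * h2 z \<partial>lborel \<partial>lborel)"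
      unfolding fourier_def h_def by (simp add: mult.assoc)
    also have "\<dots> = (\<integral>z. \<integral>w. exp (\<i> * complex_of_real (x * w)) * h1 (w - z) * h2 z \<partial>lborel \<partial>lborel)"
      using lborel_pair.Fubini_integral[OF integrable_convolution_integrand[OF h1(1) h2(1),
            of "\<lambda>w. exp (\<i> * complex_of_real (x * w))"]]
      by simp
    also have "\<dots> = (\<integral>z. exp (\<i> * complex_of_real (x * z)) * h2 z * fourier h1 x \<partial>lborel)"
    proof (intro Bochner_Integration.integral_cong refl)
      fix z :: real
      have "(\<integral>w. exp (\<i> * complex_of_real (x * w)) * h1 (w - z) \<partial>lborel)
          = (\<integral>v. exp (\<i> * complex_of_real (x * (z + v))) * h1 v \<partial>lborel)"
        using lborel_integral_real_affine[of 1 "\<lambda>w. exp (\<i> * complex_of_real (x * w)) * h1 (w - z)" z]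
        by simp
      also have "\<dots> = exp (\<i> * complex_of_real (x * z)) * fourier h1 x"
        unfolding fourier_def
        by (simp add: distrib_left exp_add mult.assoc flip: integral_mult_right_zero)
      finally show "(\<integral>w. exp (\<i> * complex_of_real (x * w)) * h1 (w - z) * h2 z \<partial>lborel)
          = exp (\<i> * complex_of_real (x * z)) * h2 z * fourier h1 x"
        by (simp add: mult_ac)
    qed
    also have "\<dots> = fourier h1 x * fourier h2 x"
      unfolding fourier_def[of h2] by (simp add: mult_ac flip: integral_mult_right_zero)
    finally show ?thesis
      using h1 h2 by simp
  qed
  ultimately show ?thesis
    unfolding FT_L1_iff_fourier by (intro exI[of _ h]) auto
qed

section \<open>Uniqueness and inversion\<close>

definition gauss :: "real \<Rightarrow> complex" where
  "gauss y = complex_of_real (std_normal_density y)"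

lemma borel_measurable_gauss [measurable]: "gauss \<in> borel_measurable borel"
  unfolding gauss_def by measurable

lemma integrable_gauss: "integrable lborel gauss"
  unfolding gauss_def by simp

lemma norm_gauss_le_1: "norm (gauss y) \<le> 1"
proof -
  have "exp (- y\<^sup>2 / 2) \<le> 1" "1 \<le> sqrt (2 * pi)"
    using pi_ge_two by auto
  then have "exp (- y\<^sup>2 / 2) \<le> sqrt (2 * pi)"
    by linarith
  then have "std_normal_density y \<le> 1"
    unfolding std_normal_density_def by (simp add: divide_simps)
  then show ?thesis
    by (simp add: gauss_def)
qed

lemma gauss_nonzero: "gauss y \<noteq> 0"
  unfolding gauss_def using normal_density_pos[of 1 0 y] by simp

lemma fourier_gauss: "fourier gauss x = complex_of_real (exp (- x\<^sup>2 / 2))"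
proof -
  have "fourier gauss x = char std_normal_distribution x"
    unfolding char_def fourier_def gauss_def
    by (subst integral_density) (auto simp: scaleR_conv_of_real mult.commute)
  then show ?thesis
    by (simp add: char_std_normal_distribution)
qed

lemma fourier_gauss_eq_gauss: "fourier gauss x = complex_of_real (sqrt (2 * pi)) * gauss x"
  unfolding fourier_gauss gauss_def std_normal_density_def by simp

lemma real_distribution_density_lborel:
  assumes a: "integrable lborel a" and nonneg: "\<And>y. 0 \<le> a y" and one: "(\<integral>y. a y \<partial>lborel) = 1"
  shows "real_distribution (density lborel (\<lambda>y. ennreal (a y)))"
proof -
  have [measurable]: "a \<in> borel_measurable borel" using a by auto
  have "(\<integral>\<^sup>+y. ennreal (a y) \<partial>lborel) = 1"
    using a nonneg one by (subst nn_integral_eq_integral) auto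
  then have "prob_space (density lborel (\<lambda>y. ennreal (a y)))"
    by (intro prob_spaceI) (simp add: emeasure_density)
  then show ?thesis
    unfolding real_distribution_def real_distribution_axioms_def by simp
qed

lemma char_density_lborel:
  assumes [measurable]: "a \<in> borel_measurable borel" and "\<And>y. 0 \<le> a y"
  shows "char (density lborel (\<lambda>y. ennreal (a y))) x = fourier (\<lambda>y. complex_of_real (a y)) x"
  unfolding char_def fourier_def using assms(2)
  by (subst integral_density) (auto simp: scaleR_conv_of_real mult.commute)

lemma probability_density_eq_if_fourier_eq:
  fixes a b :: "real \<Rightarrow> real"
  assumes a: "integrable lborel a" and b: "integrable lborel b"
    and nonneg: "\<And>y. 0 \<le> a y" "\<And>y. 0 \<le> b y"
    and one: "(\<integral>y. a y \<partial>lborel) = 1" "(\<integral>y. b y \<partial>lborel) = 1"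
    and eq: "\<And>x. fourier (\<lambda>y. complex_of_real (a y)) x = fourier (\<lambda>y. complex_of_real (b y)) x"
  shows "AE y in lborel. a y = b y"
proof -
  have [measurable]: "a \<in> borel_measurable borel" "b \<in> borel_measurable borel"
    using a b by auto
  have "density lborel (\<lambda>y. ennreal (a y)) = density lborel (\<lambda>y. ennreal (b y))"
  proof (rule Levy_uniqueness)
    show "real_distribution (density lborel (\<lambda>y. ennreal (a y)))"
      "real_distribution (density lborel (\<lambda>y. ennreal (b y)))"
      using a b nonneg one by (simp_all add: real_distribution_density_lborel)
    show "char (density lborel (\<lambda>y. ennreal (a y))) = char (density lborel (\<lambda>y. ennreal (b y)))"
      using nonneg by (auto simp: char_density_lborel eq)
  qed
  then have "AE y in lborel. ennreal (a y) = ennreal (b y)"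
  proof (subst (asm) finite_density_unique)
    show "integral\<^sup>N lborel (\<lambda>y. ennreal (a y)) \<noteq> \<infinity>"
      using a nonneg by (subst nn_integral_eq_integral) auto
  qed (auto simp: nonneg)
  then show ?thesis
    by eventually_elim (use nonneg in \<open>simp add: ennreal_inj\<close>)
qed

lemma nonneg_fourier_eq_imp_AE_eq:
  fixes a b :: "real \<Rightarrow> real"
  assumes a: "integrable lborel a" and b: "integrable lborel b"
    and nonneg: "\<And>y. 0 \<le> a y" "\<And>y. 0 \<le> b y"
    and eq: "\<And>x. fourier (\<lambda>y. complex_of_real (a y)) x = fourier (\<lambda>y. complex_of_real (b y)) x"
  shows "AE y in lborel. a y = b y"
proof -
  define c where "c = (\<integral>y. a y \<partial>lborel)"
  have c_b: "c = (\<integral>y. b y \<partial>lborel)"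
    using eq[of 0] by (simp add: fourier_def c_def)
  show ?thesis
  proof (cases "c = 0")
    case True
    have "AE y in lborel. a y = 0"
      using True a nonneg by (simp add: c_def integral_nonneg_eq_0_iff_AE)
    moreover have "AE y in lborel. b y = 0"
      using True b nonneg by (simp add: c_b integral_nonneg_eq_0_iff_AE)
    ultimately show ?thesis
      by eventually_elim simp
  next
    case False
    then have c: "0 < c"
      using nonneg by (simp add: c_def integral_nonneg_AE order_less_le)
    have "fourier (\<lambda>y. complex_of_real (d y / c)) x = fourier (\<lambda>y. complex_of_real (d y)) x / complex_of_real c"
      for d :: "real \<Rightarrow> real" and x
      using fourier_cmult[of "1 / complex_of_real c" "\<lambda>y. complex_of_real (d y)" x] by simp
    then have "AE y in lborel. a y / c = b y / c"
      using a b nonneg c c_b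
      by (intro probability_density_eq_if_fourier_eq) (simp_all add: c_def eq)
    then show ?thesis
      by eventually_elim (use c in simp)
  qed
qed

lemma real_fourier_eq_0_imp_AE_0:
  fixes a :: "real \<Rightarrow> real"
  assumes a: "integrable lborel a" and zero: "\<And>x. fourier (\<lambda>y. complex_of_real (a y)) x = 0"
  shows "AE y in lborel. a y = 0"
proof -
  have "AE y in lborel. max (a y) 0 = max (- a y) 0"
  proof (rule nonneg_fourier_eq_imp_AE_eq)
    fix x
    have "(\<lambda>y. complex_of_real (max (a y) 0) - complex_of_real (max (- a y) 0)) = (\<lambda>y. complex_of_real (a y))"
      by (auto simp: fun_eq_iff max_def)
    then have "fourier (\<lambda>y. complex_of_real (max (a y) 0)) x - fourier (\<lambda>y. complex_of_real (max (- a y) 0)) x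
        = fourier (\<lambda>y. complex_of_real (a y)) x"
      using a by (subst fourier_diff[symmetric]) auto
    then show "fourier (\<lambda>y. complex_of_real (max (a y) 0)) x = fourier (\<lambda>y. complex_of_real (max (- a y) 0)) x"
      using zero by simp
  qed (use a in auto)
  then show ?thesis
    by eventually_elim (auto simp: max_def split: if_splits)
qed

lemma fourier_eq_0_imp_AE_0:
  assumes psi: "integrable lborel \<psi>" and zero: "\<And>x. fourier \<psi> x = 0"
  shows "AE y in lborel. \<psi> y = 0"
proof -
  have cnj_psi: "integrable lborel (\<lambda>y. cnj (\<psi> y))"
    using psi by simp
  have zero_cnj: "fourier (\<lambda>y. cnj (\<psi> y)) x = 0" for x
    by (simp add: fourier_cnj zero)
  have "AE y in lborel. Re (\<psi> y) = 0"
  proof (rule real_fourier_eq_0_imp_AE_0)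
    have re: "(\<lambda>y. complex_of_real (Re (\<psi> y))) = (\<lambda>y. (1 / 2) * (\<psi> y + cnj (\<psi> y)))"
      by (simp add: fun_eq_iff complex_add_cnj)
    show "fourier (\<lambda>y. complex_of_real (Re (\<psi> y))) x = 0" for x
      unfolding re fourier_cmult fourier_add[OF psi cnj_psi] zero zero_cnj by simp
  qed (use psi in auto)
  moreover have "AE y in lborel. Im (\<psi> y) = 0"
  proof (rule real_fourier_eq_0_imp_AE_0)
    have im: "(\<lambda>y. complex_of_real (Im (\<psi> y))) = (\<lambda>y. (- \<i> / 2) * (\<psi> y - cnj (\<psi> y)))"
      by (simp add: fun_eq_iff complex_diff_cnj algebra_simps)
    show "fourier (\<lambda>y. complex_of_real (Im (\<psi> y))) x = 0" for x
      unfolding im fourier_cmult fourier_diff[OF psi cnj_psi] zero zero_cnj by simp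
  qed (use psi in auto)
  ultimately show ?thesis
    by eventually_elim (simp add: complex_eq_iff)
qed

lemma fourier_mult_gauss:
  assumes psi: "integrable lborel \<psi>"
  shows "fourier (\<lambda>y. \<psi> y * gauss y) x * complex_of_real (sqrt (2 * pi))
    = (\<integral>s. fourier \<psi> (x + s) * gauss s \<partial>lborel)"
proof -
  have "fourier (\<lambda>y. \<psi> y * gauss y) x * complex_of_real (sqrt (2 * pi))
      = (\<integral>y. (exp (\<i> * complex_of_real (x * y)) * \<psi> y) * fourier gauss (1 * y) \<partial>lborel)"
    unfolding fourier_def[of "\<lambda>y. \<psi> y * gauss y"] fourier_gauss_eq_gauss
    by (simp add: mult_ac flip: integral_mult_left_zero integral_mult_right_zero)
  also have "\<dots> = (\<integral>s. fourier (\<lambda>y. exp (\<i> * complex_of_real (x * y)) * \<psi> y) (1 * s) * gauss s \<partial>lborel)"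
    by (simp only: integral_fourier_mult_swap[OF integrable_fourier_integrand[OF psi] integrable_gauss])
  finally show ?thesis
    by (simp only: fourier_modulation mult_1_left)
qed

lemma fourier_reflected_fourier_mult_gauss:
  assumes G: "integrable lborel G"
  shows "fourier (\<lambda>y. fourier G (- y) * gauss y) x
    = complex_of_real (sqrt (2 * pi)) * (\<integral>s. G (x + s) * gauss s \<partial>lborel)"
proof -
  have "fourier (\<lambda>y. fourier G (- y) * gauss y) x
      = (\<integral>y. fourier G (- 1 * y) * (exp (\<i> * complex_of_real (x * y)) * gauss y) \<partial>lborel)"
    unfolding fourier_def[of "\<lambda>y. fourier G (- y) * gauss y"] by (simp add: mult_ac)
  also have "\<dots> = (\<integral>t. G t * fourier (\<lambda>y. exp (\<i> * complex_of_real (x * y)) * gauss y) (- 1 * t) \<partial>lborel)"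
    by (simp only: integral_fourier_mult_swap[OF G integrable_fourier_integrand[OF integrable_gauss]])
  also have "\<dots> = complex_of_real (sqrt (2 * pi)) * (\<integral>t. G t * gauss (t - x) \<partial>lborel)"
  proof -
    have "fourier (\<lambda>y. exp (\<i> * complex_of_real (x * y)) * gauss y) (- 1 * t)
        = complex_of_real (sqrt (2 * pi)) * gauss (t - x)" for t
      unfolding fourier_modulation fourier_gauss_eq_gauss
      by (simp add: gauss_def std_normal_density_def power2_commute)
    then show ?thesis
      by (simp add: mult_ac flip: integral_mult_left_zero integral_mult_right_zero)
  qed
  also have "(\<integral>t. G t * gauss (t - x) \<partial>lborel) = (\<integral>s. G (x + s) * gauss s \<partial>lborel)"
    using lborel_integral_real_affine[of 1 "\<lambda>t. G t * gauss (t - x)" x] by simp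
  finally show ?thesis .
qed

text \<open>Both sides are compared after multiplication by the Gaussian, whose transform is known;
  uniqueness of the transform does the rest.\<close>

lemma fourier_inversion_AE:
  assumes psi: "integrable lborel \<psi>" and G: "integrable lborel (fourier \<psi>)"
  shows "AE y in lborel. \<psi> y = fourier (fourier \<psi>) (- y) / complex_of_real (2 * pi)"
proof -
  define r where "r = complex_of_real (sqrt (2 * pi))"
  define \<psi>' where "\<psi>' y = fourier (fourier \<psi>) (- y) / complex_of_real (2 * pi)" for y
  have r: "r \<noteq> 0" "r * r = complex_of_real (2 * pi)"
    unfolding r_def by (simp_all flip: of_real_mult)
  have [measurable]: "\<psi> \<in> borel_measurable borel" "\<psi>' \<in> borel_measurable borel"
    using psi G unfolding \<psi>'_def by auto
  have psi_gauss: "integrable lborel (\<lambda>y. \<psi> y * gauss y)"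
    by (rule Bochner_Integration.integrable_bound[OF psi])
       (auto simp: norm_mult mult_left_le norm_gauss_le_1)
  have psi'_gauss: "integrable lborel (\<lambda>y. \<psi>' y * gauss y)"
  proof (rule Bochner_Integration.integrable_bound)
    define C where "C = (\<integral>t. norm (fourier \<psi> t) \<partial>lborel) / (2 * pi)"
    show "integrable lborel (\<lambda>y. C * norm (gauss y))"
      using integrable_gauss by simp
    show "AE y in lborel. norm (\<psi>' y * gauss y) \<le> norm (C * norm (gauss y))"
      using norm_fourier_le[of "fourier \<psi>"] pi_gt_zero unfolding C_def
      by (intro AE_I2) (auto simp: \<psi>'_def norm_mult norm_divide intro!: mult_right_mono divide_right_mono)
  qed measurable
  have "fourier (\<lambda>y. \<psi> y * gauss y) x = fourier (\<lambda>y. \<psi>' y * gauss y) x" for x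
  proof -
    define I where "I = (\<integral>s. fourier \<psi> (x + s) * gauss s \<partial>lborel)"
    have "r * fourier (\<lambda>y. \<psi> y * gauss y) x = I"
      using fourier_mult_gauss[OF psi, of x] by (simp add: I_def r_def mult.commute)
    moreover have "fourier (\<lambda>y. \<psi>' y * gauss y) x = fourier (\<lambda>y. fourier (fourier \<psi>) (- y) * gauss y) x / (r * r)"
      unfolding \<psi>'_def r(2) fourier_def by (simp add: mult_ac)
    then have "r * fourier (\<lambda>y. \<psi>' y * gauss y) x = I"
      using fourier_reflected_fourier_mult_gauss[OF G, of x] r(1) by (simp add: I_def flip: r_def)
    ultimately show ?thesis
      using r(1) mult_left_cancel by metis
  qed
  then have "AE y in lborel. (\<psi> y - \<psi>' y) * gauss y = 0"
    using psi_gauss psi'_gauss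
    by (intro fourier_eq_0_imp_AE_0) (simp_all add: left_diff_distrib fourier_diff)
  then show ?thesis
    unfolding \<psi>'_def by eventually_elim (simp add: gauss_nonzero)
qed

section \<open>Antiderivatives of transforms\<close>

lemma filterlim_real_Suc_mult_at_infinity:
  assumes "y \<noteq> 0"
  shows "filterlim (\<lambda>j. real (Suc j) * y) at_infinity sequentially"
proof (rule filterlim_norm_at_top_imp_at_infinity)
  have "\<bar>y\<bar> > 0"
    using assms by simp
  then have "filterlim (\<lambda>j. real (Suc j) * \<bar>y\<bar>) at_top sequentially"
    by real_asymp
  then show "filterlim (\<lambda>j. norm (real (Suc j) * y)) at_top sequentially"
    by (simp add: abs_mult)
qed

lemma gauss_averages_of_fourier_tendsto_0:
  assumes H: "integrable lborel H"
  shows "(\<lambda>j. \<integral>s. fourier H (real (Suc j) * s) * gauss s \<partial>lborel) \<longlonglongrightarrow> 0"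
proof -
  have [measurable]: "H \<in> borel_measurable borel"
    using H by auto
  have gauss_decay: "((\<lambda>z::real. exp (- z\<^sup>2 / 2)) \<longlongrightarrow> 0) at_infinity"
    unfolding at_infinity_eq_at_top_bot by (rule filterlim_sup) real_asymp+
  define damped where "damped j y = H y * complex_of_real (exp (- (real (Suc j) * y)\<^sup>2 / 2))" for j y
  have "(\<lambda>j. \<integral>y. damped j y \<partial>lborel) \<longlonglongrightarrow> (\<integral>(y::real). 0 \<partial>lborel)"
  proof (rule integral_dominated_convergence[where w="\<lambda>y. norm (H y)"])
    show "AE y in lborel. (\<lambda>j. damped j y) \<longlonglongrightarrow> 0"
      using AE_lborel_singleton[of 0]
    proof eventually_elim
      case (elim y)
      have "(\<lambda>j. exp (- (real (Suc j) * y)\<^sup>2 / 2)) \<longlonglongrightarrow> 0"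
        using filterlim_compose[OF gauss_decay filterlim_real_Suc_mult_at_infinity[OF elim]] by simp
      then have "(\<lambda>j. damped j y) \<longlonglongrightarrow> H y * complex_of_real 0"
        unfolding damped_def by (intro tendsto_intros)
      then show ?case
        by simp
    qed
    show "AE y in lborel. norm (damped j y) \<le> norm (H y)" for j
      by (intro AE_I2) (simp add: damped_def norm_mult mult_right_le_one_le)
  qed (use H in \<open>auto simp: damped_def\<close>)
  moreover have "(\<integral>s. fourier H (real (Suc j) * s) * gauss s \<partial>lborel) = (\<integral>y. damped j y \<partial>lborel)" for j
    unfolding integral_fourier_mult_swap[OF H integrable_gauss] fourier_gauss damped_def ..
  ultimately show ?thesis
    by simp
qed

text \<open>A weak form of the Riemann--Lebesgue lemma: Gaussian averages of the transform at
  growing scales tend both to the limit at infinity and to \<open>0\<close>.\<close>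

lemma fourier_limit_at_infinity_eq_0:
  assumes H: "integrable lborel H" and lim: "(fourier H \<longlongrightarrow> c) at_infinity"
  shows "c = 0"
proof -
  have [measurable]: "fourier H \<in> borel_measurable borel"
    using H by simp
  have "(\<lambda>j. \<integral>s. fourier H (real (Suc j) * s) * gauss s \<partial>lborel) \<longlonglongrightarrow> (\<integral>s. c * gauss s \<partial>lborel)"
  proof (rule integral_dominated_convergence[where w="\<lambda>s. (\<integral>y. norm (H y) \<partial>lborel) * norm (gauss s)"])
    show "AE s in lborel. (\<lambda>j. fourier H (real (Suc j) * s) * gauss s) \<longlonglongrightarrow> c * gauss s"
      using AE_lborel_singleton[of 0]
    proof eventually_elim
      case (elim s)
      show ?case
        using filterlim_compose[OF lim filterlim_real_Suc_mult_at_infinity[OF elim]]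
        by (intro tendsto_mult tendsto_const) (simp add: comp_def)
    qed
    show "AE s in lborel. norm (fourier H (real (Suc j) * s) * gauss s)
        \<le> (\<integral>y. norm (H y) \<partial>lborel) * norm (gauss s)" for j
      by (intro AE_I2) (simp add: norm_mult norm_fourier_le mult_right_mono)
    show "integrable lborel (\<lambda>s. (\<integral>y. norm (H y) \<partial>lborel) * norm (gauss s))"
      using integrable_gauss by simp
  qed measurable
  moreover have "(\<integral>s. gauss s \<partial>lborel) = 1"
    unfolding gauss_def by simp
  ultimately have "(\<lambda>j. \<integral>s. fourier H (real (Suc j) * s) * gauss s \<partial>lborel) \<longlonglongrightarrow> c"
    by simp
  then show "c = 0"
    using gauss_averages_of_fourier_tendsto_0[OF H] by (rule LIMSEQ_unique)
qed

text \<open>An integrable majorant (its primitive on \<open>t > 0\<close> is \<open>2 arctan \<surd>t\<close>) for all the weights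
  needed below: \<open>1 / (1 + t\<^sup>2)\<close>, \<open>\<surd>|t| / (1 + t\<^sup>2)\<close>, and \<open>1 / \<surd>|t|\<close> near \<open>0\<close>.\<close>

definition root_weight :: "real \<Rightarrow> real" where
  "root_weight t = 1 / (sqrt \<bar>t\<bar> * (1 + \<bar>t\<bar>))"

lemma root_weight_nonneg: "0 \<le> root_weight t"
  by (simp add: root_weight_def)

lemma borel_measurable_root_weight[measurable]: "root_weight \<in> borel_measurable borel"
  unfolding root_weight_def by measurable

lemma set_integrable_root_weight_positive: "set_integrable lborel (einterval 0 \<infinity>) root_weight"
proof (rule interval_integral_FTC_nonneg(1)[where F="\<lambda>t. 2 * arctan (sqrt t)" and A=0 and B=pi])
  show "DERIV (\<lambda>t. 2 * arctan (sqrt t)) x :> root_weight x" if "0 < ereal x" for x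
    using that by (auto intro!: derivative_eq_intros simp: root_weight_def divide_simps)
  show "isCont root_weight x" if "0 < ereal x" for x
    using that unfolding root_weight_def by (auto intro!: continuous_intros)
  have "((\<lambda>t. 2 * arctan (sqrt t)) \<longlongrightarrow> 2 * arctan (sqrt 0)) (at 0)"
    by (intro tendsto_intros)
  then show "(((\<lambda>t. 2 * arctan (sqrt t)) \<circ> real_of_ereal) \<longlongrightarrow> 0) (at_right 0)"
    unfolding zero_ereal_def ereal_tendsto_simps by (simp add: filterlim_at_split)
  have "((\<lambda>t. 2 * arctan (sqrt t)) \<longlongrightarrow> 2 * (pi / 2)) at_top"
    by (intro tendsto_mult tendsto_const filterlim_compose[OF tendsto_arctan_at_top sqrt_at_top])
  then show "(((\<lambda>t. 2 * arctan (sqrt t)) \<circ> real_of_ereal) \<longlongrightarrow> pi) (at_left \<infinity>)"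
    unfolding ereal_tendsto_simps by simp
qed (auto simp: root_weight_nonneg)

lemma integrable_root_weight: "integrable lborel root_weight"
proof -
  have "einterval 0 \<infinity> = {0::real<..}"
    by (auto simp: einterval_def)
  then have pos: "integrable lborel (\<lambda>t. indicator {0<..} t * root_weight t)"
    using set_integrable_root_weight_positive unfolding set_integrable_def by simp
  have neg: "integrable lborel (\<lambda>t. indicator {0<..} (0 + (-1) * t) * root_weight (0 + (-1) * t))"
    by (rule lborel_integrable_real_affine[OF pos]) simp
  have "root_weight = (\<lambda>t. indicator {0<..} t * root_weight t
      + indicator {0<..} (0 + (-1) * t) * root_weight (0 + (-1) * t))"
    by (rule ext, cases "t > 0"; cases "t < 0") (auto simp: root_weight_def indicator_def)
  then show ?thesis
    using Bochner_Integration.integrable_add[OF pos neg] by simp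
qed

lemma root_weight_bounds:
  assumes "t \<noteq> 0"
  shows "1 / (1 + t\<^sup>2) \<le> 2 * root_weight t"
    and "sqrt \<bar>t\<bar> / (1 + t\<^sup>2) \<le> 2 * root_weight t"
    and "\<bar>t\<bar> \<le> 1 \<Longrightarrow> 1 / sqrt \<bar>t\<bar> \<le> 2 * root_weight t"
proof -
  define a where "a = sqrt \<bar>t\<bar>"
  have a: "0 < a"
    using assms by (simp add: a_def)
  have t_abs: "\<bar>t\<bar> = a\<^sup>2"
    by (simp add: a_def)
  have t_sq: "t\<^sup>2 = a\<^sup>2 * a\<^sup>2"
    by (metis power2_abs t_abs power2_eq_square)
  have denom: "0 < a * (1 + a\<^sup>2)" "0 < 1 + a\<^sup>2 * a\<^sup>2"
    using a by (simp_all add: add_pos_nonneg)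
  have weight: "2 * root_weight t = 2 / (a * (1 + a\<^sup>2))"
    using a by (simp add: root_weight_def t_abs flip: a_def)
  have "0 \<le> (a - 1)\<^sup>2 * (a\<^sup>2 + a + 1)"
    using a by simp
  then have "a * (1 + a\<^sup>2) \<le> 1 + a\<^sup>2 * a\<^sup>2"
    by (simp add: power2_eq_square algebra_simps)
  then show "1 / (1 + t\<^sup>2) \<le> 2 * root_weight t"
    unfolding weight t_sq using denom by (intro frac_le) auto
  have "a * (a * (1 + a\<^sup>2)) \<le> 2 * (1 + a\<^sup>2 * a\<^sup>2)"
    using zero_le_power2[of "a\<^sup>2 - 1 / 2"] by (simp add: power2_eq_square algebra_simps)
  then show "sqrt \<bar>t\<bar> / (1 + t\<^sup>2) \<le> 2 * root_weight t"
    unfolding weight t_sq a_def[symmetric] using denom by (simp add: pos_divide_le_eq pos_le_divide_eq mult_ac)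
  show "1 / sqrt \<bar>t\<bar> \<le> 2 * root_weight t" if "\<bar>t\<bar> \<le> 1"
  proof -
    have "a * (1 + a\<^sup>2) \<le> 2 * a"
      using that a by (simp add: t_abs algebra_simps power2_eq_square)
    then show ?thesis
      unfolding weight a_def[symmetric] using a denom by (simp add: pos_divide_le_eq pos_le_divide_eq mult_ac)
  qed
qed

lemma lborel_integral_derivative_eq_0:
  fixes g g' :: "real \<Rightarrow> complex"
  assumes deriv: "\<And>x. (g has_vector_derivative g' x) (at x)"
    and cont: "continuous_on UNIV g'"
    and lim: "(g \<longlongrightarrow> 0) at_infinity"
    and g': "integrable lborel g'"
  shows "(\<integral>t. g' t \<partial>lborel) = 0"
proof -
  have "(LBINT t=-\<infinity>..\<infinity>. g' t) = 0 - 0"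
  proof (rule interval_integral_FTC_integrable[where F=g])
    show "isCont g' x" for x
      using cont by (simp add: continuous_on_eq_continuous_at)
    show "set_integrable lborel (einterval (-\<infinity>) \<infinity>) g'"
      using g' unfolding set_integrable_def by simp
    show "((g \<circ> real_of_ereal) \<longlongrightarrow> 0) (at_right (-\<infinity>))"
      unfolding ereal_tendsto_simps using filterlim_mono[OF lim order_refl at_bot_le_at_infinity] .
    show "((g \<circ> real_of_ereal) \<longlongrightarrow> 0) (at_left \<infinity>)"
      unfolding ereal_tendsto_simps using filterlim_mono[OF lim order_refl at_top_le_at_infinity] .
  qed (auto simp: deriv)
  then show ?thesis
    unfolding interval_lebesgue_integral_def set_lebesgue_integral_def by simp
qed

lemma integrable_if_quadratic_decay:
  fixes \<phi> :: "real \<Rightarrow> complex"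
  assumes [measurable]: "\<phi> \<in> borel_measurable borel" and decay: "\<And>t. norm (\<phi> t) * (1 + t\<^sup>2) \<le> B"
  shows "integrable lborel \<phi>" and "integrable lborel (\<lambda>t. sqrt \<bar>t\<bar> * norm (\<phi> t))"
proof -
  have "norm (\<phi> 0) \<le> B"
    using decay[of 0] by simp
  then have B: "0 \<le> B"
    by (rule order_trans[OF norm_ge_zero])
  have le: "norm (\<phi> t) \<le> B * (1 / (1 + t\<^sup>2))" for t
    using decay[of t] by (simp add: pos_le_divide_eq add_pos_nonneg)
  have majorant: "integrable lborel (\<lambda>t. 2 * B * root_weight t)"
    using integrable_root_weight by simp
  show "integrable lborel \<phi>"
  proof (rule Bochner_Integration.integrable_bound[OF majorant])
    show "AE t in lborel. norm (\<phi> t) \<le> norm (2 * B * root_weight t)"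
      using AE_lborel_singleton[of 0]
    proof eventually_elim
      case (elim t)
      have "norm (\<phi> t) \<le> B * (2 * root_weight t)"
        using le[of t] mult_left_mono[OF root_weight_bounds(1)[OF elim] B] by linarith
      then show ?case
        using B root_weight_nonneg[of t] by simp
    qed
  qed measurable
  show "integrable lborel (\<lambda>t. sqrt \<bar>t\<bar> * norm (\<phi> t))"
  proof (rule Bochner_Integration.integrable_bound[OF majorant])
    show "AE t in lborel. norm (sqrt \<bar>t\<bar> * norm (\<phi> t)) \<le> norm (2 * B * root_weight t)"
      using AE_lborel_singleton[of 0]
    proof eventually_elim
      case (elim t)
      have "sqrt \<bar>t\<bar> * norm (\<phi> t) \<le> B * (sqrt \<bar>t\<bar> / (1 + t\<^sup>2))"
        using mult_left_mono[OF le[of t], of "sqrt \<bar>t\<bar>"] by (simp add: mult_ac)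
      also have "\<dots> \<le> B * (2 * root_weight t)"
        by (rule mult_left_mono[OF root_weight_bounds(2)[OF elim] B])
      finally show ?case
        using B root_weight_nonneg[of t] by simp
    qed
  qed measurable
qed

lemma norm_fourier_le_sqrt_if_integral_eq_0:
  assumes g: "integrable lborel g" and zero: "(\<integral>t. g t \<partial>lborel) = 0"
    and w: "integrable lborel (\<lambda>t. sqrt \<bar>t\<bar> * norm (g t))"
  shows "norm (fourier g y) \<le> 2 * sqrt \<bar>y\<bar> * (\<integral>t. sqrt \<bar>t\<bar> * norm (g t) \<partial>lborel)"
proof -
  have diff: "integrable lborel (\<lambda>t. (exp (\<i> * complex_of_real (y * t)) - 1) * g t)"
    using Bochner_Integration.integrable_diff[OF integrable_fourier_integrand[OF g, of y] g]
    by (simp add: left_diff_distrib)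
  have "fourier g y = (\<integral>t. (exp (\<i> * complex_of_real (y * t)) - 1) * g t \<partial>lborel)"
    unfolding fourier_def using integrable_fourier_integrand[OF g, of y] g zero
    by (simp add: left_diff_distrib Bochner_Integration.integral_diff)
  then have "norm (fourier g y) \<le> (\<integral>t. norm ((exp (\<i> * complex_of_real (y * t)) - 1) * g t) \<partial>lborel)"
    by (simp add: integral_norm_bound)
  also have "\<dots> \<le> (\<integral>t. 2 * sqrt \<bar>y\<bar> * (sqrt \<bar>t\<bar> * norm (g t)) \<partial>lborel)"
  proof (rule integral_mono)
    show "norm ((exp (\<i> * complex_of_real (y * t)) - 1) * g t) \<le> 2 * sqrt \<bar>y\<bar> * (sqrt \<bar>t\<bar> * norm (g t))"
      for t
      using mult_right_mono[OF norm_exp_i_minus_1_le_sqrt[of "y * t"] norm_ge_zero[of "g t"]]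
      by (simp add: norm_mult abs_mult real_sqrt_mult mult_ac)
  qed (use diff w in auto)
  finally show ?thesis
    by simp
qed

lemma integrable_divide_of_real_if_sqrt_bound:
  assumes psi: "integrable lborel \<psi>" and bound: "AE y in lborel. norm (\<psi> y) \<le> C * sqrt \<bar>y\<bar>"
  shows "integrable lborel (\<lambda>y. \<psi> y / complex_of_real y)"
proof (rule Bochner_Integration.integrable_bound)
  show "integrable lborel (\<lambda>y. 2 * \<bar>C\<bar> * root_weight y + norm (\<psi> y))"
    using integrable_root_weight psi by simp
  show "AE y in lborel. norm (\<psi> y / complex_of_real y) \<le> norm (2 * \<bar>C\<bar> * root_weight y + norm (\<psi> y))"
    using AE_lborel_singleton[of 0] bound
  proof eventually_elim
    case (elim y)
    have "norm (\<psi> y / complex_of_real y) \<le> 2 * \<bar>C\<bar> * root_weight y + norm (\<psi> y)"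
    proof (cases "\<bar>y\<bar> \<le> 1")
      case True
      have "norm (\<psi> y) \<le> \<bar>C\<bar> * sqrt \<bar>y\<bar>"
        using elim(2) mult_right_mono[OF abs_ge_self[of C], of "sqrt \<bar>y\<bar>"] by simp
      then have "norm (\<psi> y / complex_of_real y) \<le> \<bar>C\<bar> * sqrt \<bar>y\<bar> / \<bar>y\<bar>"
        by (simp add: norm_divide divide_right_mono)
      also have "\<dots> = \<bar>C\<bar> * (1 / sqrt \<bar>y\<bar>)"
        using elim(1) by (simp add: field_simps flip: real_sqrt_mult_self[of "\<bar>y\<bar>"])
      also have "\<dots> \<le> \<bar>C\<bar> * (2 * root_weight y)"
        by (intro mult_left_mono root_weight_bounds(3) elim(1) True) simp
      also have "\<dots> = 2 * \<bar>C\<bar> * root_weight y"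
        by simp
      finally show ?thesis
        by (rule add_increasing2[OF norm_ge_zero])
    next
      case False
      have "norm (\<psi> y) / \<bar>y\<bar> \<le> norm (\<psi> y) / 1"
        using False by (intro divide_left_mono) auto
      then have "norm (\<psi> y / complex_of_real y) \<le> norm (\<psi> y)"
        by (simp add: norm_divide)
      then show ?thesis
        using root_weight_nonneg[of y] by (intro add_increasing) auto
    qed
    then show ?case
      by simp
  qed
qed (use psi in measurable)

lemma AE_norm_le_sqrt_if_fourier_integral_eq_0:
  assumes psi: "integrable lborel \<psi>" and G: "integrable lborel (fourier \<psi>)"
    and zero: "(\<integral>t. fourier \<psi> t \<partial>lborel) = 0"
    and weighted: "integrable lborel (\<lambda>t. sqrt \<bar>t\<bar> * norm (fourier \<psi> t))"
  shows "AE y in lborel. norm (\<psi> y) \<le> (\<integral>t. sqrt \<bar>t\<bar> * norm (fourier \<psi> t) \<partial>lborel) / pi * sqrt \<bar>y\<bar>"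
  using fourier_inversion_AE[OF psi G]
proof eventually_elim
  case (elim y)
  have "norm (\<psi> y) = norm (fourier (fourier \<psi>) (- y)) / (2 * pi)"
    using elim by (simp add: norm_divide)
  also have "\<dots> \<le> 2 * sqrt \<bar>y\<bar> * (\<integral>t. sqrt \<bar>t\<bar> * norm (fourier \<psi> t) \<partial>lborel) / (2 * pi)"
    using norm_fourier_le_sqrt_if_integral_eq_0[OF G zero weighted, of "- y"]
    by (intro divide_right_mono) auto
  finally show ?case
    by (simp add: mult.commute)
qed

lemma fourier_antiderivative:
  assumes psi: "integrable lborel \<psi>" and bound: "AE y in lborel. norm (\<psi> y) \<le> C * sqrt \<bar>y\<bar>"
  defines "H \<equiv> \<lambda>y. - \<i> * (\<psi> y / complex_of_real y)"
  shows "integrable lborel H" and "(fourier H has_vector_derivative fourier \<psi> x) (at x)"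
proof -
  have [measurable]: "\<psi> \<in> borel_measurable borel"
    using psi by auto
  show H: "integrable lborel H"
    unfolding H_def by (intro integrable_mult_right integrable_divide_of_real_if_sqrt_bound[OF psi bound])
  have yH: "AE y in lborel. \<i> * complex_of_real y * H y = \<psi> y"
    using AE_lborel_singleton[of 0] by eventually_elim (simp add: H_def)
  have "integrable lborel (\<lambda>y. complex_of_real y * H y)"
  proof (rule integrable_cong_AE_imp)
    show "integrable lborel (\<lambda>y. - \<i> * \<psi> y)"
      using psi by simp
    show "AE y in lborel. - \<i> * \<psi> y = complex_of_real y * H y"
      using AE_lborel_singleton[of 0] by eventually_elim (simp add: H_def)
  qed (simp add: H_def)
  then show "(fourier H has_vector_derivative fourier \<psi> x) (at x)"
    using fourier_has_vector_derivative[OF H] fourier_cong_AE[OF _ _ yH] by (simp add: H_def)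
qed

lemma FT_L1_if_derivative_FT_L1:
  fixes g g' :: "real \<Rightarrow> complex"
  assumes deriv: "\<And>x. (g has_vector_derivative g' x) (at x)"
    and cont: "continuous_on UNIV g'"
    and lim: "(g \<longlongrightarrow> 0) at_infinity"
    and FT: "FT_L1 g'"
    and decay: "\<And>t. norm (g' t) * (1 + t\<^sup>2) \<le> B"
  shows "FT_L1 g"
proof -
  obtain \<psi> where psi: "integrable lborel \<psi>" and g': "g' = fourier \<psi>"
    using FT unfolding FT_L1_iff_fourier by blast
  have g'_int: "integrable lborel g'" and weighted: "integrable lborel (\<lambda>t. sqrt \<bar>t\<bar> * norm (g' t))"
    using integrable_if_quadratic_decay[OF borel_measurable_continuous_onI[OF cont] decay] by auto
  have "(\<integral>t. g' t \<partial>lborel) = 0"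
    by (rule lborel_integral_derivative_eq_0[OF deriv cont lim g'_int])
  then obtain C where bound: "AE y in lborel. norm (\<psi> y) \<le> C * sqrt \<bar>y\<bar>"
    using AE_norm_le_sqrt_if_fourier_integral_eq_0[OF psi] g'_int weighted unfolding g' by blast
  define H where "H y = - \<i> * (\<psi> y / complex_of_real y)" for y
  have H: "integrable lborel H"
    unfolding H_def by (rule fourier_antiderivative(1)[OF psi bound])
  have "((\<lambda>x. fourier H x - g x) has_vector_derivative fourier \<psi> x - g' x) (at x)" for x
    unfolding H_def by (intro has_vector_derivative_diff fourier_antiderivative(2)[OF psi bound] deriv)
  then have "((\<lambda>x. fourier H x - g x) has_vector_derivative 0) (at x)" for x
    by (simp add: g')
  then obtain c where c: "\<And>x. fourier H x - g x = c"
    using has_derivative_zero_constant[of UNIV "\<lambda>x. fourier H x - g x"]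
    by (auto simp: has_vector_derivative_def)
  then have fourier_H: "fourier H = (\<lambda>x. g x + c)"
    by (auto simp: fun_eq_iff algebra_simps)
  have "(fourier H \<longlongrightarrow> 0 + c) at_infinity"
    unfolding fourier_H by (intro tendsto_add lim tendsto_const)
  then have "c = 0"
    using fourier_limit_at_infinity_eq_0[OF H] by simp
  then show ?thesis
    unfolding FT_L1_iff_fourier using H fourier_H by auto
qed

section \<open>The weights \<open>u\<^sup>m\<close>\<close>

lemma upow_0 [simp]: "upow 0 x = 1"
  by (simp add: upow_def)

lemma upow_add: "upow (a + b) x = upow a x * upow b x"
  by (simp add: upow_def power_add)

lemma norm_upow: "norm (upow m x) = norm (complex_of_real x - \<i>) ^ m"
  by (simp add: upow_def norm_power)

lemma one_le_norm_x_minus_i: "1 \<le> norm (complex_of_real x - \<i>)"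
  using abs_Im_le_cmod[of "complex_of_real x - \<i>"] by simp

lemma norm_upow_mono: "q \<le> p \<Longrightarrow> norm (upow q x) \<le> norm (upow p x)"
  unfolding norm_upow by (rule power_increasing[OF _ one_le_norm_x_minus_i])

lemma upow_nonzero: "upow m x \<noteq> 0"
  using norm_upow_mono[of 0 m x] by auto

lemma norm_upow_2: "norm (upow 2 x) = 1 + x\<^sup>2"
  unfolding norm_upow by (simp add: cmod_def)

lemma upow_has_vector_derivative: "(upow m has_vector_derivative (of_nat m * upow (m - 1) x)) (at x)"
proof -
  have "((\<lambda>z. (z - \<i>) ^ m) has_field_derivative (of_nat m * (complex_of_real x - \<i>) ^ (m - 1))) (at (complex_of_real x))"
    by (auto intro!: derivative_eq_intros)
  from has_vector_derivative_real_field[OF this] show ?thesis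
    unfolding upow_def by simp
qed

lemma upow_mult_has_vector_derivative:
  assumes "(\<phi> has_vector_derivative D) (at x)"
  shows "((\<lambda>x. \<phi> x * upow t x) has_vector_derivative
      D * upow t x + of_nat t * (\<phi> x * upow (t - 1) x)) (at x)"
  using has_vector_derivative_mult[OF assms upow_has_vector_derivative] by (simp add: algebra_simps)

lemma continuous_on_upow: "continuous_on UNIV (upow m)"
  unfolding upow_def by (intro continuous_intros)

lemma set_integrable_exp_negative_halfline:
  "set_integrable lborel (einterval (-\<infinity>) 0) (\<lambda>y::real. exp y)"
proof (rule interval_integral_FTC_nonneg(1)[where F=exp and A=0 and B=1])
  show "((exp \<circ> real_of_ereal) \<longlongrightarrow> 0) (at_right (-\<infinity>))"
    unfolding ereal_tendsto_simps by (rule exp_at_bot)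
  show "((exp \<circ> real_of_ereal) \<longlongrightarrow> 1) (at_left 0)"
    unfolding zero_ereal_def ereal_tendsto_simps
    by (metis exp_zero isCont_exp isCont_def tendsto_within_subset top_greatest)
qed (auto intro!: derivative_eq_intros)

lemma fourier_exp_negative_halfline:
  defines "h \<equiv> \<lambda>y. indicator (einterval (-\<infinity>) 0) y *\<^sub>R exp (complex_of_real y)"
  shows "integrable lborel h" and "fourier h x = 1 / (1 + \<i> * complex_of_real x)"
proof -
  define c where "c = 1 + \<i> * complex_of_real x"
  have "c \<noteq> 0"
    unfolding c_def by (auto simp: complex_eq_iff)
  have majorant: "integrable lborel (\<lambda>y. indicator (einterval (-\<infinity>) 0) y *\<^sub>R exp y)"
    using set_integrable_exp_negative_halfline unfolding set_integrable_def by simp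
  show "integrable lborel h"
    unfolding h_def by (rule Bochner_Integration.integrable_bound[OF majorant]) (auto simp: indicator_def)
  define F where "F y = exp (c * complex_of_real y) / c" for y
  have "fourier h x = (LBINT y=-\<infinity>..0. exp (c * complex_of_real y))"
    unfolding fourier_def interval_lebesgue_integral_def set_lebesgue_integral_def h_def c_def
    by (simp, intro Bochner_Integration.integral_cong refl)
       (auto simp: indicator_def algebra_simps mult_exp_exp)
  also have "\<dots> = F 0 - 0"
  proof (rule interval_integral_FTC_integrable[where F=F])
    show "(F has_vector_derivative exp (c * complex_of_real y)) (at y)" for y
    proof -
      have "((\<lambda>z. exp (c * z) / c) has_field_derivative exp (c * complex_of_real y)) (at (complex_of_real y))"
        using \<open>c \<noteq> 0\<close> by (auto intro!: derivative_eq_intros)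
      then show ?thesis
        unfolding F_def by (rule has_vector_derivative_real_field)
    qed
    show "set_integrable lborel (einterval (- \<infinity>) 0) (\<lambda>y. exp (c * complex_of_real y))"
      unfolding set_integrable_def
      by (rule Bochner_Integration.integrable_bound[OF majorant])
         (auto simp: norm_mult indicator_def c_def norm_exp)
    have "((\<lambda>y. exp y / norm c) \<longlongrightarrow> 0 / norm c) at_bot"
      using \<open>c \<noteq> 0\<close> by (intro tendsto_divide exp_at_bot tendsto_const) auto
    then have "((\<lambda>y. norm (F y)) \<longlongrightarrow> 0) at_bot"
      by (simp add: F_def norm_divide norm_exp c_def)
    then show "((F \<circ> real_of_ereal) \<longlongrightarrow> 0) (at_right (- \<infinity>))"
      unfolding ereal_tendsto_simps by (simp add: tendsto_norm_zero_iff)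
    have "isCont F 0"
      unfolding F_def using \<open>c \<noteq> 0\<close> by (intro continuous_intros)
    then show "((F \<circ> real_of_ereal) \<longlongrightarrow> F 0) (at_left 0)"
      unfolding zero_ereal_def ereal_tendsto_simps by (simp add: isCont_def filterlim_at_split)
  qed (auto intro!: continuous_intros)
  finally show "fourier h x = 1 / (1 + \<i> * complex_of_real x)"
    by (simp add: F_def c_def)
qed

lemma FT_L1_inverse_x_minus_i: "FT_L1 (\<lambda>x. 1 / (complex_of_real x - \<i>))"
proof -
  have "FT_L1 (fourier (\<lambda>y. indicator (einterval (-\<infinity>) 0) y *\<^sub>R exp (complex_of_real y)))"
    unfolding FT_L1_iff_fourier using fourier_exp_negative_halfline(1) by blast
  then have "FT_L1 (\<lambda>x. \<i> * (1 / (1 + \<i> * complex_of_real x)))"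
    unfolding fourier_exp_negative_halfline(2) by (rule FT_L1_cmult)
  moreover have "\<i> * (1 / (1 + \<i> * complex_of_real x)) = 1 / (complex_of_real x - \<i>)" for x
  proof -
    have "1 + \<i> * complex_of_real x = \<i> * (complex_of_real x - \<i>)"
      by (simp add: algebra_simps)
    then show ?thesis
      by simp
  qed
  ultimately show ?thesis
    by simp
qed

lemma FT_L1_inverse_upow: "1 \<le> m \<Longrightarrow> FT_L1 (\<lambda>x. 1 / upow m x)"
proof (induction m rule: dec_induct)
  case base
  then show ?case
    using FT_L1_inverse_x_minus_i by (simp add: upow_def)
next
  case (step m)
  have "FT_L1 (\<lambda>x. (1 / upow m x) * (1 / upow 1 x))"
    using step.IH FT_L1_inverse_x_minus_i by (intro FT_L1_mult) (auto simp: upow_def)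
  moreover have "(1 / upow m x) * (1 / upow 1 x) = 1 / upow (Suc m) x" for x
    using upow_add[of m 1 x] by simp
  ultimately show ?case
    by simp
qed

lemma bounded_range_if_C0:
  assumes "g \<in> C0"
  shows "bounded (range g)"
proof -
  have cont: "continuous_on UNIV g" and lim: "(g \<longlongrightarrow> 0) at_infinity"
    using assms by (auto simp: C0_def)
  obtain b where b: "\<And>x. b \<le> norm x \<Longrightarrow> norm (g x) < 1"
    using tendstoD[OF lim zero_less_one] unfolding eventually_at_infinity by auto
  have "compact (g ` cball 0 b)"
    by (rule compact_continuous_image[OF continuous_on_subset[OF cont]]) auto
  then obtain B where B: "\<And>x. x \<in> cball 0 b \<Longrightarrow> norm (g x) \<le> B"
    using compact_imp_bounded bounded_iff by (metis image_eqI)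
  have "norm (g x) \<le> max B 1" for x
    using b[of x] B[of x] by (cases "b \<le> norm x") auto
  then show ?thesis
    unfolding bounded_iff by blast
qed

lemma C0_add: "f \<in> C0 \<Longrightarrow> g \<in> C0 \<Longrightarrow> (\<lambda>x. f x + g x) \<in> C0"
  unfolding C0_def using tendsto_add[of f 0 _ g 0] by (auto intro: continuous_on_add)

lemma C0_cmult: "f \<in> C0 \<Longrightarrow> (\<lambda>x. c * f x) \<in> C0"
  unfolding C0_def using tendsto_mult[OF tendsto_const, of f 0 _ c] by (auto intro: continuous_intros)

definition upow_bounded :: "nat \<Rightarrow> (real \<Rightarrow> complex) \<Rightarrow> bool" where
  "upow_bounded p \<phi> \<longleftrightarrow> bounded (range (\<lambda>x. \<phi> x * upow p x))"

lemma upow_bounded_mono: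
  assumes "upow_bounded p \<phi>" "q \<le> p"
  shows "upow_bounded q \<phi>"
proof -
  obtain K where K: "\<And>x. norm (\<phi> x * upow p x) \<le> K"
    using assms(1) unfolding upow_bounded_def bounded_iff by blast
  have "norm (\<phi> x * upow q x) \<le> norm (\<phi> x * upow p x)" for x
    using assms(2) by (simp add: norm_mult mult_left_mono norm_upow_mono)
  then have "norm (\<phi> x * upow q x) \<le> K" for x
    using K[of x] by (rule order_trans)
  then show ?thesis
    unfolding upow_bounded_def bounded_iff by blast
qed

lemma C0_if_upow_bounded:
  assumes cont: "continuous_on UNIV \<phi>" and bounded: "upow_bounded p \<phi>" and "q < p"
  shows "(\<lambda>x. \<phi> x * upow q x) \<in> C0"
proof -
  obtain K where K: "\<And>x. norm (\<phi> x * upow p x) \<le> K"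
    using bounded unfolding upow_bounded_def bounded_iff by blast
  have "norm (\<phi> x * upow q x) \<le> K / \<bar>x\<bar>" if "x \<noteq> 0" for x
  proof -
    have "\<bar>x\<bar> \<le> norm (upow 1 x)"
      using abs_Re_le_cmod[of "complex_of_real x - \<i>"] by (simp add: upow_def)
    also have "\<dots> \<le> norm (upow (p - q) x)"
      using \<open>q < p\<close> by (intro norm_upow_mono) simp
    finally have "norm (\<phi> x * upow q x) * \<bar>x\<bar> \<le> norm (\<phi> x * upow q x) * norm (upow (p - q) x)"
      by (simp add: mult_left_mono)
    also have "\<dots> = norm (\<phi> x * upow p x)"
      using \<open>q < p\<close> upow_add[of q "p - q" x] by (simp add: norm_mult)
    finally show ?thesis
      using K[of x] that by (simp add: pos_le_divide_eq)
  qed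
  moreover have "0 \<le> K"
    using K[of 0] norm_ge_zero order_trans by blast
  ultimately have "\<forall>\<^sub>F x in at_infinity. norm (\<phi> x * upow q x) \<le> norm (K / x)"
    unfolding eventually_at_infinity by (intro exI[of _ 1]) auto
  moreover have "((\<lambda>x::real. norm (K / x)) \<longlongrightarrow> 0) at_infinity"
    by (intro tendsto_norm_zero tendsto_divide_0[OF tendsto_const filterlim_ident])
  ultimately have "((\<lambda>x. \<phi> x * upow q x) \<longlongrightarrow> 0) at_infinity"
    by (rule Lim_null_comparison)
  then show ?thesis
    unfolding C0_def using cont by (auto intro: continuous_intros continuous_on_upow)
qed

lemma upow_bounded_add:
  assumes "upow_bounded p \<phi>" "upow_bounded p \<psi>"
  shows "upow_bounded p (\<lambda>x. \<phi> x + \<psi> x)"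
proof -
  obtain K L where "\<And>x. norm (\<phi> x * upow p x) \<le> K" "\<And>x. norm (\<psi> x * upow p x) \<le> L"
    using assms unfolding upow_bounded_def bounded_iff by blast
  then have "norm ((\<phi> x + \<psi> x) * upow p x) \<le> K + L" for x
    by (simp add: distrib_right norm_triangle_le add_mono)
  then show ?thesis
    unfolding upow_bounded_def bounded_iff by blast
qed

lemma upow_bounded_cmult:
  assumes "upow_bounded p \<phi>"
  shows "upow_bounded p (\<lambda>x. c * \<phi> x)"
proof -
  obtain K where "\<And>x. norm (\<phi> x * upow p x) \<le> K"
    using assms unfolding upow_bounded_def bounded_iff by blast
  then have "norm (c * \<phi> x * upow p x) \<le> norm c * K" for x
    by (simp add: norm_mult mult.assoc mult_left_mono)
  then show ?thesis
    unfolding upow_bounded_def bounded_iff by blast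
qed

lemma upow_bounded_upow_mult: "upow_bounded (p + q) \<phi> \<Longrightarrow> upow_bounded p (\<lambda>x. \<phi> x * upow q x)"
  unfolding upow_bounded_def by (simp add: upow_add mult_ac)

lemma FT_L1_upow_mult_step:
  fixes \<phi> \<phi>' :: "real \<Rightarrow> complex"
  assumes deriv: "\<And>x. (\<phi> has_vector_derivative \<phi>' x) (at x)"
    and cont': "continuous_on UNIV \<phi>'"
    and bounded: "upow_bounded (s + 1) \<phi>" and bounded': "upow_bounded (s + 2) \<phi>'"
    and FT': "FT_L1 (\<lambda>x. \<phi>' x * upow s x)"
    and FT_pred: "0 < s \<Longrightarrow> FT_L1 (\<lambda>x. \<phi> x * upow (s - 1) x)"
  shows "FT_L1 (\<lambda>x. \<phi> x * upow s x)"
proof -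
  define g' where "g' x = \<phi>' x * upow s x + of_nat s * (\<phi> x * upow (s - 1) x)" for x
  have cont: "continuous_on UNIV \<phi>"
    using deriv by (intro continuous_on_vector_derivative) (auto intro: has_vector_derivative_at_within)
  have "((\<lambda>x. \<phi> x * upow s x) has_vector_derivative g' x) (at x)" for x
    unfolding g'_def by (rule upow_mult_has_vector_derivative[OF deriv])
  moreover have "continuous_on UNIV g'"
    unfolding g'_def by (intro continuous_intros cont cont' continuous_on_upow)
  moreover have "((\<lambda>x. \<phi> x * upow s x) \<longlongrightarrow> 0) at_infinity"
    using C0_if_upow_bounded[OF cont bounded] by (simp add: C0_def)
  moreover have "FT_L1 g' \<and> upow_bounded 2 g'"
  proof (cases "s = 0")
    case True
    then show ?thesis
      unfolding g'_def using FT' bounded' by (simp add: numeral_2_eq_2)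
  next
    case False
    have "upow_bounded 2 (\<lambda>x. \<phi>' x * upow s x)" "upow_bounded 2 (\<lambda>x. \<phi> x * upow (s - 1) x)"
      using bounded bounded' False by (simp_all add: upow_bounded_upow_mult add.commute)
    then show ?thesis
      unfolding g'_def using False
      by (intro conjI FT_L1_add FT_L1_cmult FT' FT_pred upow_bounded_add upow_bounded_cmult) simp_all
  qed
  moreover obtain B where "\<And>t. norm (g' t * upow 2 t) \<le> B"
    using calculation unfolding upow_bounded_def bounded_iff by blast
  then have "norm (g' t) * (1 + t\<^sup>2) \<le> B" for t
    by (simp add: norm_mult norm_upow_2)
  ultimately show ?thesis
    using FT_L1_if_derivative_FT_L1 by blast
qed

lemma FT_L1_upow_mult_upto:
  fixes \<phi> \<phi>' :: "real \<Rightarrow> complex"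
  assumes deriv: "\<And>x. (\<phi> has_vector_derivative \<phi>' x) (at x)"
    and cont': "continuous_on UNIV \<phi>'"
    and bounded: "upow_bounded (S + 1) \<phi>" and bounded': "upow_bounded (S + 2) \<phi>'"
    and FT': "\<And>s. s \<le> S \<Longrightarrow> FT_L1 (\<lambda>x. \<phi>' x * upow s x)"
    and "s \<le> S"
  shows "FT_L1 (\<lambda>x. \<phi> x * upow s x)"
  using \<open>s \<le> S\<close>
proof (induction s)
  case 0
  show ?case
  proof (rule FT_L1_upow_mult_step[OF deriv cont'])
    show "upow_bounded (0 + 1) \<phi>" "upow_bounded (0 + 2) \<phi>'"
      by (simp_all add: upow_bounded_mono[OF bounded] upow_bounded_mono[OF bounded'])
  qed (use FT'[of 0] in simp_all)
next
  case (Suc s)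
  show ?case
  proof (rule FT_L1_upow_mult_step[OF deriv cont'])
    show "upow_bounded (Suc s + 1) \<phi>" "upow_bounded (Suc s + 2) \<phi>'"
      using Suc.prems by (simp_all add: upow_bounded_mono[OF bounded] upow_bounded_mono[OF bounded'])
    show "FT_L1 (\<lambda>x. \<phi>' x * upow (Suc s) x)"
      by (rule FT'[OF Suc.prems])
    show "FT_L1 (\<lambda>x. \<phi> x * upow (Suc s - 1) x)"
      using Suc by simp
  qed
qed

section \<open>Weighted derivatives of functions in \<open>Qnk\<close>\<close>

lemma nderiv_0 [simp]: "nderiv 0 f = f"
  by (simp add: nderiv_def)

lemma nderiv_Suc: "nderiv (Suc l) f = vderiv (nderiv l f)"
  by (simp add: nderiv_def)

lemma nderiv_Suc_inner: "nderiv (Suc l) f = nderiv l (vderiv f)"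
  unfolding nderiv_def funpow_Suc_right by simp

lemma has_vector_derivative_vderiv:
  "\<phi> differentiable (at x) \<Longrightarrow> (\<phi> has_vector_derivative vderiv \<phi> x) (at x)"
  by (simp add: vderiv_def vector_derivative_works[symmetric])

lemma vderiv_eqI: "(\<And>x. (\<phi> has_vector_derivative \<phi>' x) (at x)) \<Longrightarrow> vderiv \<phi> = \<phi>'"
  unfolding vderiv_def using vector_derivative_at by blast

lemma Ck_has_vector_derivative:
  assumes "f \<in> Ck k" "l < k"
  shows "(nderiv l f has_vector_derivative nderiv (Suc l) f x) (at x)"
  using assms by (simp add: Ck_def nderiv_Suc vderiv_def vector_derivative_works[symmetric])

lemma Ck_continuous_on:
  assumes "f \<in> Ck k" "l \<le> k"
  shows "continuous_on UNIV (nderiv l f)"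
proof (cases "l = k")
  case False
  then show ?thesis
    using assms Ck_has_vector_derivative[of f k l]
    by (intro continuous_on_vector_derivative) (auto intro: has_vector_derivative_at_within)
qed (use assms in \<open>simp add: Ck_def\<close>)

lemma QnkD:
  assumes "f \<in> Qnk n k"
  shows "f \<in> Ck k"
    and "upow_bounded (2 * n) f"
    and "\<And>l. 1 \<le> l \<Longrightarrow> l \<le> k \<Longrightarrow> upow_bounded (n + l + 1) (nderiv l f)"
    and "FT_L1 (\<lambda>x. nderiv k f x * upow (max k n) x)"
  using assms unfolding Qnk_def upow_bounded_def mem_Collect_eq by (auto intro: bounded_range_if_C0)

lemma Qnk_upow_bounded:
  assumes "1 \<le> n" "f \<in> Qnk n k" "l \<le> k"
  shows "upow_bounded (max n l + 1) (nderiv l f)"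
proof (cases "l = 0")
  case True
  then show ?thesis
    using upow_bounded_mono[OF QnkD(2)[OF assms(2)], of "n + 1"] assms(1) by simp
next
  case False
  then show ?thesis
    using upow_bounded_mono[OF QnkD(3)[OF assms(2), of l], of "max n l + 1"] assms(3) by simp
qed

lemma Qnk_C0:
  assumes "1 \<le> n" "f \<in> Qnk n k" "l \<le> k" "s \<le> max n l"
  shows "(\<lambda>x. nderiv l f x * upow s x) \<in> C0"
  using C0_if_upow_bounded[OF Ck_continuous_on[OF QnkD(1)[OF assms(2)] assms(3)]
      Qnk_upow_bounded[OF assms(1-3)]] assms(4) by simp

lemma Qnk_FT_L1_top:
  assumes "f \<in> Qnk n k" "s \<le> max n k"
  shows "FT_L1 (\<lambda>x. nderiv k f x * upow s x)"
proof -
  define M where "M = max k n"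
  have top: "FT_L1 (\<lambda>x. nderiv k f x * upow M x)"
    unfolding M_def by (rule QnkD(4)[OF assms(1)])
  show ?thesis
  proof (cases "s = M")
    case False
    then have "s < M"
      using assms(2) by (simp add: M_def)
    have "FT_L1 (\<lambda>x. (nderiv k f x * upow M x) * (1 / upow (M - s) x))"
      using \<open>s < M\<close> by (intro FT_L1_mult[OF top] FT_L1_inverse_upow) simp
    moreover have "(nderiv k f x * upow M x) * (1 / upow (M - s) x) = nderiv k f x * upow s x" for x
      using \<open>s < M\<close> upow_add[of s "M - s" x] upow_nonzero[of "M - s" x] by simp
    ultimately show ?thesis
      by simp
  qed (use top in simp)
qed

lemma Qnk_FT_L1:
  assumes n: "1 \<le> n" and f: "f \<in> Qnk n k" and "l \<le> k" "s \<le> max n l"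
  shows "FT_L1 (\<lambda>x. nderiv l f x * upow s x)"
proof -
  have "\<forall>s \<le> max n l. FT_L1 (\<lambda>x. nderiv l f x * upow s x)"
    using \<open>l \<le> k\<close>
  proof (induction l rule: inc_induct)
    case base
    then show ?case
      using Qnk_FT_L1_top[OF f] by simp
  next
    case (step l)
    show ?case
    proof (intro allI impI)
      fix s
      assume "s \<le> max n l"
      show "FT_L1 (\<lambda>x. nderiv l f x * upow s x)"
      proof (rule FT_L1_upow_mult_upto[where S="max n l"])
        show "(nderiv l f has_vector_derivative nderiv (Suc l) f x) (at x)" for x
          using Ck_has_vector_derivative[OF QnkD(1)[OF f] step(2)] .
        show "continuous_on UNIV (nderiv (Suc l) f)"
          using Ck_continuous_on[OF QnkD(1)[OF f]] step(2) by simp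
        show "upow_bounded (max n l + 1) (nderiv l f)"
          using Qnk_upow_bounded[OF n f] step(2) by simp
        show "upow_bounded (max n l + 2) (nderiv (Suc l) f)"
          using upow_bounded_mono[OF QnkD(3)[OF f, of "Suc l"], of "max n l + 2"] step(2) by simp
        show "FT_L1 (\<lambda>x. nderiv (Suc l) f x * upow s x)" if "s \<le> max n l" for s
          using step.IH that by simp
      qed fact
    qed
  qed
  then show ?thesis
    using assms by blast
qed

definition differentiable_upto :: "nat \<Rightarrow> (real \<Rightarrow> complex) \<Rightarrow> bool" where
  "differentiable_upto m \<phi> \<longleftrightarrow> (\<forall>i<m. \<forall>x. nderiv i \<phi> differentiable (at x))"

lemma differentiable_upto_0 [simp]: "differentiable_upto 0 \<phi>"
  by (simp add: differentiable_upto_def)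

lemma differentiable_upto_Suc:
  "differentiable_upto (Suc m) \<phi> \<longleftrightarrow> (\<forall>x. \<phi> differentiable (at x)) \<and> differentiable_upto m (vderiv \<phi>)"
  unfolding differentiable_upto_def All_less_Suc2 nderiv_Suc_inner by simp

lemma add_cmult_has_vector_derivative:
  assumes "\<And>x. \<phi>1 differentiable (at x)" "\<And>x. \<phi>2 differentiable (at x)"
  shows "((\<lambda>x. \<phi>1 x + c * \<phi>2 x) has_vector_derivative vderiv \<phi>1 x + c * vderiv \<phi>2 x) (at x)"
  using assms by (intro has_vector_derivative_add has_vector_derivative_mult_right has_vector_derivative_vderiv)

lemma differentiable_upto_add_cmult:
  "differentiable_upto m \<phi>1 \<Longrightarrow> differentiable_upto m \<phi>2 \<Longrightarrow> differentiable_upto m (\<lambda>x. \<phi>1 x + c * \<phi>2 x)"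
proof (induction m arbitrary: \<phi>1 \<phi>2)
  case (Suc m)
  then have "\<And>x. \<phi>1 differentiable (at x)" "\<And>x. \<phi>2 differentiable (at x)"
    by (simp_all add: differentiable_upto_Suc)
  note deriv = add_cmult_has_vector_derivative[OF this]
  show ?case
    using Suc deriv unfolding differentiable_upto_Suc vderiv_eqI[OF deriv]
    by (auto intro: differentiableI_vector)
qed simp

lemma nderiv_add_cmult:
  "differentiable_upto m \<phi>1 \<Longrightarrow> differentiable_upto m \<phi>2 \<Longrightarrow>
    nderiv m (\<lambda>x. \<phi>1 x + c * \<phi>2 x) = (\<lambda>x. nderiv m \<phi>1 x + c * nderiv m \<phi>2 x)"
proof (induction m arbitrary: \<phi>1 \<phi>2)
  case (Suc m)
  then have "\<And>x. \<phi>1 differentiable (at x)" "\<And>x. \<phi>2 differentiable (at x)"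
    by (simp_all add: differentiable_upto_Suc)
  note vderiv = vderiv_eqI[OF add_cmult_has_vector_derivative[OF this]]
  show ?case
    using Suc unfolding nderiv_Suc_inner vderiv by (simp add: differentiable_upto_Suc)
qed simp

lemma vderiv_nderiv_upow_mult:
  assumes "f \<in> Ck k" "j < k"
  shows "vderiv (\<lambda>x. nderiv j f x * upow t x) =
    (\<lambda>x. nderiv (Suc j) f x * upow t x + of_nat t * (nderiv j f x * upow (t - 1) x))"
  by (rule vderiv_eqI, rule upow_mult_has_vector_derivative, rule Ck_has_vector_derivative[OF assms])

lemma differentiable_upto_nderiv_upow_mult:
  assumes f: "f \<in> Ck k"
  shows "j + m \<le> k \<Longrightarrow> differentiable_upto m (\<lambda>x. nderiv j f x * upow t x)"
proof (induction m arbitrary: j t)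
  case (Suc m)
  then have "j < k"
    by simp
  have "differentiable_upto m (\<lambda>x. nderiv (Suc j) f x * upow t x + of_nat t * (nderiv j f x * upow (t - 1) x))"
    using Suc by (intro differentiable_upto_add_cmult Suc.IH) simp_all
  then show ?case
    unfolding differentiable_upto_Suc vderiv_nderiv_upow_mult[OF f \<open>j < k\<close>]
    using upow_mult_has_vector_derivative[OF Ck_has_vector_derivative[OF f \<open>j < k\<close>]]
    by (auto intro: differentiableI_vector)
qed simp

lemma nderiv_Suc_nderiv_upow_mult:
  assumes f: "f \<in> Ck k" and "j + Suc m \<le> k"
  shows "nderiv (Suc m) (\<lambda>x. nderiv j f x * upow t x) =
    (\<lambda>x. nderiv m (\<lambda>x. nderiv (Suc j) f x * upow t x) x
      + of_nat t * nderiv m (\<lambda>x. nderiv j f x * upow (t - 1) x) x)"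
proof -
  have "j < k"
    using assms(2) by simp
  then show ?thesis
    unfolding nderiv_Suc_inner[of m] vderiv_nderiv_upow_mult[OF f \<open>j < k\<close>]
    using assms(2) by (intro nderiv_add_cmult differentiable_upto_nderiv_upow_mult[OF f]) simp_all
qed

lemma nderiv_nderiv_upow_mult_C0_FT_L1:
  assumes f: "f \<in> Ck k"
    and weighted: "\<And>l s. l \<le> k \<Longrightarrow> s \<le> max n l \<Longrightarrow>
      (\<lambda>x. nderiv l f x * upow s x) \<in> C0 \<and> FT_L1 (\<lambda>x. nderiv l f x * upow s x)"
  shows "j + m \<le> k \<Longrightarrow> t \<le> max n (j + m) \<Longrightarrow>
      nderiv m (\<lambda>x. nderiv j f x * upow t x) \<in> C0 \<and> FT_L1 (nderiv m (\<lambda>x. nderiv j f x * upow t x))"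
proof (induction m arbitrary: j t)
  case 0
  then show ?case
    using weighted[of j t] by simp
next
  case (Suc m)
  have "nderiv m (\<lambda>x. nderiv (Suc j) f x * upow t x) \<in> C0 \<and> FT_L1 (nderiv m (\<lambda>x. nderiv (Suc j) f x * upow t x))"
    "nderiv m (\<lambda>x. nderiv j f x * upow (t - 1) x) \<in> C0 \<and> FT_L1 (nderiv m (\<lambda>x. nderiv j f x * upow (t - 1) x))"
    using Suc by (intro Suc.IH; auto)+
  then show ?case
    unfolding nderiv_Suc_nderiv_upow_mult[OF f Suc.prems(1)]
    by (auto intro!: C0_add C0_cmult FT_L1_add FT_L1_cmult)
qed

lemma Qnk_nderiv_upow_mult:
  assumes "1 \<le> n" "f \<in> Qnk n k" "l \<le> k" "s \<le> max n l"
  shows "nderiv l (\<lambda>x. f x * upow s x) \<in> C0 \<and> FT_L1 (nderiv l (\<lambda>x. f x * upow s x))"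
  using nderiv_nderiv_upow_mult_C0_FT_L1[OF QnkD(1)[OF assms(2)], of n 0 l s]
    Qnk_C0[OF assms(1,2)] Qnk_FT_L1[OF assms(1,2)] assms(3,4)
  by simp

lemma W0_if_C0_FT_L1:
  assumes "g \<in> C0" "FT_L1 g"
  shows "g \<in> W0"
proof -
  obtain h where h: "integrable lborel h" and g: "g = fourier h"
    using assms(2) unfolding FT_L1_iff_fourier by blast
  have [measurable]: "h \<in> borel_measurable borel"
    using h by auto
  define M where "M = density lborel (\<lambda>y. ennreal (norm (h y)))"
  have "finite_measure M"
  proof
    have "emeasure M (space M) = (\<integral>\<^sup>+y. ennreal (norm (h y)) \<partial>lborel)"
      unfolding M_def by (simp add: emeasure_density)
    then show "emeasure M (space M) \<noteq> \<infinity>"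
      using h by (simp add: integrable_iff_bounded)
  qed
  moreover have "sets M = sets borel"
    unfolding M_def by simp
  moreover have polar: "norm (h y) *\<^sub>R sgn (h y) = h y" for y
    by (cases "h y = 0") (simp_all add: sgn_div_norm)
  have "integrable M (\<lambda>y. sgn (h y))"
    unfolding M_def by (subst integrable_density) (auto simp: polar h)
  moreover have "g x = (\<integral>y. exp (\<i> * complex_of_real (x * y)) * sgn (h y) \<partial>M)" for x
    unfolding M_def g fourier_def
    by (subst integral_density) (auto intro!: Bochner_Integration.integral_cong, metis polar mult_scaleR_right)
  ultimately show ?thesis
    unfolding W0_def using assms(1) by blast
qed

theorem proposition5p2:
  fixes n k :: nat and f :: "real \<Rightarrow> complex"
  assumes "1 \<le> n" and "1 \<le> k"
    and "f \<in> Qnk n k"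
  shows "(\<forall>s l. s \<le> max n l \<and> l \<le> k \<longrightarrow>
            (\<lambda>x. nderiv l f x * upow s x) \<in> C0 \<and> FT_L1 (\<lambda>x. nderiv l f x * upow s x))
       \<and> (\<forall>s l. s \<le> max n l \<and> l \<le> k \<longrightarrow>
            nderiv l (\<lambda>x. f x * upow s x) \<in> C0 \<and> FT_L1 (nderiv l (\<lambda>x. f x * upow s x)))
       \<and> Qnk n k \<subseteq> Wk k"
proof -
  have "Qnk n k \<subseteq> Wk k"
  proof
    fix g
    assume g: "g \<in> Qnk n k"
    have "nderiv p (\<lambda>x. g x * upow p x) \<in> W0" if "p \<le> k" for p
      using Qnk_nderiv_upow_mult[OF assms(1) g that] by (intro W0_if_C0_FT_L1) simp_all
    then show "g \<in> Wk k"
      unfolding Wk_def using QnkD(1)[OF g] by blast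
  qed
  then show ?thesis
    using Qnk_C0[OF assms(1,3)] Qnk_FT_L1[OF assms(1,3)] Qnk_nderiv_upow_mult[OF assms(1,3)] by blast
qed

end
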